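(* Let $\mathcal C$ be an $A_\infty$-category and $\mathcal B\subset\mathcal C$ a full $A_\infty$-subcategory. With the notation of the context, for $n\ge2$ the maps $\bar b_n$ satisfy $\bar b_n=\mu^{(n)}b-(1\otimes\mu^{(n-1)}b)\mu-(\mu^{(n-1)}b\otimes1)\mu+(1\otimes\mu^{(n-2)}b\otimes1)\mu^{(3)}$ on $(T^+s\mathcal C)^{\otimes n}$ (with $\mu^{(0)}=0$). The family $(\bar b_n)_{n\ge1}$ satisfies the $A_\infty$-equations $\sum_{r+n+t=k}(1^{\otimes r}\otimes\bar b_n\otimes1^{\otimes t})\bar b_{r+1+t}=0$, so it makes the desuspension $\overline{\mathcal C}=s^{-1}T^+s\mathcal C$ into an $A_\infty$-category. Moreover each $\bar b_n$ maps $(s\mathsf D(\mathcal C|\mathcal B))^{\otimes n}$ into $s\mathsf D(\mathcal C|\mathcal B)$, so the restrictions make $\mathsf D(\mathcal C|\mathcal B)$ an $A_\infty$-category.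
   Context: Throughout, $\Bbbk$ is a commutative ring, $\otimes=\otimes_\Bbbk$, the Koszul sign rule $(x\otimes y)(f\otimes g)=(-1)^{\deg y\cdot\deg f}xf\otimes yg$ is used, maps are written to the right of their arguments and $fg$ means "first $f$, then $g$". A graded quiver $\mathcal A$ is a class $\mathrm{Ob}\,\mathcal A$ with graded $\Bbbk$-modules $\mathcal A(X,Y)$; its suspension $s\mathcal A$ has $(s\mathcal A)^d(X,Y)=\mathcal A^{d+1}(X,Y)$. Put $T^ns\mathcal A(X,Y)=\bigoplus_{X_1,\dots,X_{n-1}}s\mathcal A(X,X_1)\otimes\cdots\otimes s\mathcal A(X_{n-1},Y)$. An $A_\infty$-category is a graded quiver with degree 1 maps $b_n:T^ns\mathcal A(X,Y)\to s\mathcal A(X,Y)$, $n\ge1$, such that $\sum_{r+n+t=k}(1^{\otimes r}\otimes b_n\otimes1^{\otimes t})b_{r+1+t}=0$ for all $k\ge1$. A full $A_\infty$-subcategory $\mathcal B\subset\mathcal C$ has $\mathrm{Ob}\,\mathcal B\subset\mathrm{Ob}\,\mathcal C$, $\mathcal B(X,Y)=\mathcal C(X,Y)$ and the same operations. Let $T^+s\mathcal C$ be the graded quiver with objects $\mathrm{Ob}\,\mathcal C$ and $T^+s\mathcal C(X,Y)=\bigoplus_{n\ge1}T^ns\mathcal C(X,Y)$; let $\mu^{(n)}:(T^+s\mathcal C)^{\otimes n}\to T^+s\mathcal C$ be the $n$-fold concatenation of tensor words ($\mu^{(1)}=1$, $\mu=\mu^{(2)}$, $\mu^{(0)}=0$).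 Let $b:T^+s\mathcal C\to T^+s\mathcal C$ be $\sum_{q+m+t=k}1^{\otimes q}\otimes b_m\otimes1^{\otimes t}$ on $T^ks\mathcal C$. Define degree 1 maps $\bar b_n:(T^+s\mathcal C)^{\otimes n}\to T^+s\mathcal C$ by $\bar b_1=b$ and, for $n\ge2$, on $T^ks\mathcal C\otimes(T^+s\mathcal C)^{\otimes(n-2)}\otimes T^ls\mathcal C$ by $\bar b_n=\mu^{(n)}\sum 1^{\otimes q}\otimes b_m\otimes1^{\otimes t}$, the sum over $m\ge1$, $0\le q<k$, $0\le t<l$ with $q+m+t$ equal to the total length of the concatenated word. The graded quiver $\mathsf D(\mathcal C|\mathcal B)$ has objects $\mathrm{Ob}\,\mathcal C$ and $s\mathsf D(\mathcal C|\mathcal B)(X,Y)$ equal to the direct summand $\bigoplus_{n\ge1}\bigoplus_{C_1,\dots,C_{n-1}\in\mathrm{Ob}\,\mathcal B}s\mathcal C(X,C_1)\otimes s\mathcal C(C_1,C_2)\otimes\cdots\otimes s\mathcal C(C_{n-1},Y)$ of $T^+s\mathcal C(X,Y)$ (for $n=1$ the summand $s\mathcal C(X,Y)$). *)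

theory Defs
  imports Main "HOL.Modules"
begin

text \<open>
The suspended hom-modules are given by their homogeneous
components: S X Y d is the submodule (sC)^d(X,Y) of a common k-module 'm with scalar
multiplication sm. A homogeneous entry of a tensor word is a tuple (X, Y, d, x) with
x in S X Y d. A word is a nonempty composable list of entries; it stands for the pure tensor
x1 (x) ... (x) xn in T^n sC(X,Y). Elements of T^+ sC are represented by formal k-linear
combinations of words (functions word => k with finite support); two such represent the same
element of T^+ sC iff their difference lies in tnull, the submodule generated by the
multilinearity relations (so free module modulo tnull is the graded tensor quiver T^+ sC).
\<close>

type_synonym ('o, 'm) ent = "'o \<times> 'o \<times> int \<times> 'm"
type_synonym ('o, 'm) word = "('o, 'm) ent list"

definition esrc :: "('o, 'm) ent \<Rightarrow> 'o" where "esrc e = fst e"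
definition etgt :: "('o, 'm) ent \<Rightarrow> 'o" where "etgt e = fst (snd e)"
definition edeg :: "('o, 'm) ent \<Rightarrow> int" where "edeg e = fst (snd (snd e))"
definition eelt :: "('o, 'm) ent \<Rightarrow> 'm" where "eelt e = snd (snd (snd e))"

definition degw :: "('o, 'm) word \<Rightarrow> int" where
  "degw w = sum_list (map edeg w)"

definition wf_word :: "'o set \<Rightarrow> ('o \<Rightarrow> 'o \<Rightarrow> int \<Rightarrow> 'm set) \<Rightarrow> ('o, 'm) word \<Rightarrow> bool" where
  "wf_word Ob S w \<longleftrightarrow> w \<noteq> [] \<and>
     (\<forall>e\<in>set w. esrc e \<in> Ob \<and> etgt e \<in> Ob \<and> eelt e \<in> S (esrc e) (etgt e) (edeg e)) \<and>
     (\<forall>i. Suc i < length w \<longrightarrow> etgt (w ! i) = esrc (w ! Suc i))"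

definition ksign :: "int \<Rightarrow> 'k::comm_ring_1" where
  "ksign d = (if even d then 1 else - 1)"

definition bapp :: "(('o, 'm) word \<Rightarrow> 'm) \<Rightarrow> ('o, 'm) word \<Rightarrow> ('o, 'm) ent" where
  "bapp b w = (esrc (hd w), etgt (last w), degw w + 1, b w)"

definition ins_b :: "(('o, 'm) word \<Rightarrow> 'm) \<Rightarrow> nat \<Rightarrow> nat \<Rightarrow> ('o, 'm) word \<Rightarrow> ('o, 'm) word" where
  "ins_b b q m w = take q w @ [bapp b (take m (drop q w))] @ drop (q + m) w"

text \<open>A_infinity-category structure: module data, degree-1 multilinear b_n (n = word length),
  and the A_infinity equations evaluated on pure tensors of homogeneous elements
  (with the Koszul sign of (1^r (x) b_n (x) 1^t)).\<close>
definition ainf_cat :: "'o set \<Rightarrow> ('o \<Rightarrow> 'o \<Rightarrow> int \<Rightarrow> 'm::ab_group_add set)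
     \<Rightarrow> ('k::comm_ring_1 \<Rightarrow> 'm \<Rightarrow> 'm) \<Rightarrow> (('o, 'm) word \<Rightarrow> 'm) \<Rightarrow> bool" where
  "ainf_cat Ob S sm b \<longleftrightarrow>
     module sm \<and>
     (\<forall>X Y d. 0 \<in> S X Y d \<and> (\<forall>x\<in>S X Y d. \<forall>y\<in>S X Y d. x + y \<in> S X Y d) \<and> (\<forall>c. \<forall>x\<in>S X Y d. sm c x \<in> S X Y d)) \<and>
     (\<forall>w. wf_word Ob S w \<longrightarrow> b w \<in> S (esrc (hd w)) (etgt (last w)) (degw w + 1)) \<and>
     (\<forall>u v X Y d x y. wf_word Ob S (u @ [(X, Y, d, x)] @ v) \<longrightarrow> wf_word Ob S (u @ [(X, Y, d, y)] @ v) \<longrightarrow>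
        b (u @ [(X, Y, d, x + y)] @ v) = b (u @ [(X, Y, d, x)] @ v) + b (u @ [(X, Y, d, y)] @ v)) \<and>
     (\<forall>u v X Y d x c. wf_word Ob S (u @ [(X, Y, d, x)] @ v) \<longrightarrow>
        b (u @ [(X, Y, d, sm c x)] @ v) = sm c (b (u @ [(X, Y, d, x)] @ v))) \<and>
     (\<forall>w. wf_word Ob S w \<longrightarrow>
        (\<Sum>r<length w. \<Sum>n\<in>{1..length w - r}. sm (ksign (degw (take r w))) (b (ins_b b r n w))) = 0)"

definition single :: "('o, 'm) word \<Rightarrow> ('o, 'm) word \<Rightarrow> 'k::comm_ring_1" where
  "single w = (\<lambda>v. if v = w then 1 else 0)"

inductive_set tnull :: "'o set \<Rightarrow> ('o \<Rightarrow> 'o \<Rightarrow> int \<Rightarrow> 'm::ab_group_add set)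
     \<Rightarrow> ('k::comm_ring_1 \<Rightarrow> 'm \<Rightarrow> 'm) \<Rightarrow> (('o, 'm) word \<Rightarrow> 'k) set"
  for Ob S sm where
  zero: "(\<lambda>_. 0) \<in> tnull Ob S sm"
| add: "f \<in> tnull Ob S sm \<Longrightarrow> g \<in> tnull Ob S sm \<Longrightarrow> (\<lambda>v. f v + g v) \<in> tnull Ob S sm"
| smul: "f \<in> tnull Ob S sm \<Longrightarrow> (\<lambda>v. c * f v) \<in> tnull Ob S sm"
| gen_add: "wf_word Ob S (u @ [(X, Y, d, x)] @ w) \<Longrightarrow> wf_word Ob S (u @ [(X, Y, d, y)] @ w) \<Longrightarrow>
     (\<lambda>v. single (u @ [(X, Y, d, x + y)] @ w) v - single (u @ [(X, Y, d, x)] @ w) v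
          - single (u @ [(X, Y, d, y)] @ w) v) \<in> tnull Ob S sm"
| gen_smul: "wf_word Ob S (u @ [(X, Y, d, x)] @ w) \<Longrightarrow>
     (\<lambda>v. single (u @ [(X, Y, d, sm c x)] @ w) v - c * single (u @ [(X, Y, d, x)] @ w) v) \<in> tnull Ob S sm"

text \<open>A tuple ws = [w_1,...,w_n] of words stands for the pure tensor w_1 (x) ... (x) w_n in
  (T^+ sC)^{(x) n}; it must be composable.\<close>
definition composable :: "'o set \<Rightarrow> ('o \<Rightarrow> 'o \<Rightarrow> int \<Rightarrow> 'm set) \<Rightarrow> ('o, 'm) word list \<Rightarrow> bool" where
  "composable Ob S ws \<longleftrightarrow> ws \<noteq> [] \<and> (\<forall>w\<in>set ws. wf_word Ob S w) \<and>
     (\<forall>i. Suc i < length ws \<longrightarrow> etgt (last (ws ! i)) = esrc (hd (ws ! Suc i)))"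

text \<open>The maps bar b_n on pure tensors: bar b_1 = b (sum over all blocks);
  for n \<ge> 2 only blocks with q < k (start inside w_1) and t < l (end inside w_n).\<close>
definition bbar :: "(('o, 'm) word \<Rightarrow> 'm) \<Rightarrow> ('o, 'm) word list \<Rightarrow> ('o, 'm) word \<Rightarrow> 'k::comm_ring_1" where
  "bbar b ws = (\<lambda>v.
     let W = concat ws; L = length W; k = length (hd ws); l = length (last ws) in
     if ws = [] then 0
     else if length ws = 1 then
       (\<Sum>q<L. \<Sum>m\<in>{1..L - q}. if v = ins_b b q m W then ksign (degw (take q W)) else 0)
     else
       (\<Sum>q<k. \<Sum>m\<in>{m. 1 \<le> m \<and> q + m \<le> L \<and> L - (q + m) < l}.
          if v = ins_b b q m W then ksign (degw (take q W)) else 0))"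

text \<open>u (x) F (x) w for a formal combination F, concatenated into T^+ sC (linear in F).\<close>
definition embed :: "('o, 'm) word \<Rightarrow> (('o, 'm) word \<Rightarrow> 'k::comm_ring_1) \<Rightarrow> ('o, 'm) word
     \<Rightarrow> ('o, 'm) word \<Rightarrow> 'k" where
  "embed u F w = (\<lambda>v. \<Sum>x\<in>{x. F x \<noteq> 0}. F x * single (u @ x @ w) v)"

definition bbar_slot :: "(('o, 'm) word \<Rightarrow> 'm) \<Rightarrow> ('o, 'm) word list \<Rightarrow> (('o, 'm) word \<Rightarrow> 'k::comm_ring_1)
     \<Rightarrow> ('o, 'm) word list \<Rightarrow> ('o, 'm) word \<Rightarrow> 'k" where
  "bbar_slot b us F ws = (\<lambda>v. \<Sum>x\<in>{x. F x \<noteq> 0}. F x * bbar b (us @ [x] @ ws) v)"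

text \<open>Words of sD(C|B): all intermediate objects C_1..C_{n-1} lie in B.\<close>
definition Dword :: "'o set \<Rightarrow> ('o, 'm) word \<Rightarrow> bool" where
  "Dword B w \<longleftrightarrow> set (map etgt (butlast w)) \<subseteq> B"

end

theory Submission
  imports Defs
begin

text \<open>
  On a tuple of words \<open>w\<^sub>1, \<dots>, w\<^sub>n\<close> with concatenation \<open>W\<close>, \<open>bar b\<^sub>n\<close> is the signed sum
  over the blocks of \<open>W\<close> that start in \<open>w\<^sub>1\<close> and end in \<open>w\<^sub>n\<close> (all blocks if \<open>n = 1\<close>) of
  \<open>W\<close> with that block replaced by its image under \<open>b\<close>. The formula for \<open>bar b\<^sub>n\<close> in terms of
  \<open>\<mu>\<close> and \<open>b\<close> is inclusion--exclusion on this set of blocks. Such a block contains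
  every junction between consecutive words, so the inner objects that survive are inner objects
  of \<open>w\<^sub>1\<close> or \<open>w\<^sub>n\<close>; hence \<open>bar b\<^sub>n\<close> preserves \<open>sD(C|B)\<close>.

  A term of the \<open>A\<^sub>\<infinity>\<close>-sum for \<open>bar b\<close> is a pair of successive block replacements in \<open>W\<close>.
  If the two blocks are disjoint, the same replacements in the other order give another term
  with the opposite Koszul sign, so these terms cancel. The remaining pairs consist of a block
  \<open>J\<close> of \<open>W\<close> and a block of \<open>J\<close>; grouped by \<open>J\<close>, they are \<open>b\<close> applied to the
  \<open>A\<^sub>\<infinity>\<close>-relation of \<open>C\<close> on \<open>J\<close>, which vanishes in \<open>T\<^sup>+ sC\<close> by multilinearity.
\<close>

lemma ksign_add: "(ksign (a + c) :: 'k::comm_ring_1) = ksign a * ksign c"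
  by (auto simp: ksign_def)

lemma ksign_add_one: "(ksign (a + 1) :: 'k::comm_ring_1) = - ksign a"
  by (auto simp: ksign_def)

lemma degw_Nil [simp]: "degw [] = 0"
  by (simp add: degw_def)

lemma degw_Cons [simp]: "degw (e # w) = edeg e + degw w"
  by (simp add: degw_def)

lemma degw_append [simp]: "degw (u @ w) = degw u + degw w"
  by (simp add: degw_def)

lemma tnull_ext: "f \<in> tnull Ob S sm \<Longrightarrow> (\<And>v. f v = g v) \<Longrightarrow> g \<in> tnull Ob S sm"
  by (metis ext)

lemma tnull_zeroI: "(\<And>v. f v = 0) \<Longrightarrow> f \<in> tnull Ob S sm"
  by (rule tnull_ext[OF tnull.zero]) simp

lemma tnull_uminus: "f \<in> tnull Ob S sm \<Longrightarrow> (\<lambda>v. - f v) \<in> tnull Ob S sm"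
  by (rule tnull_ext[OF tnull.smul[where c = "-1"]]) auto

lemma tnull_diff:
  "f \<in> tnull Ob S sm \<Longrightarrow> g \<in> tnull Ob S sm \<Longrightarrow> (\<lambda>v. f v - g v) \<in> tnull Ob S sm"
  by (rule tnull_ext[OF tnull.add[OF _ tnull_uminus]]) auto

lemma tnull_sum:
  "finite I \<Longrightarrow> (\<And>i. i \<in> I \<Longrightarrow> f i \<in> tnull Ob S sm) \<Longrightarrow> (\<lambda>v. \<Sum>i\<in>I. f i v) \<in> tnull Ob S sm"
proof (induction I rule: finite_induct)
  case empty
  then show ?case by (intro tnull_zeroI) simp
next
  case (insert x F)
  have "(\<lambda>v. f x v + (\<Sum>i\<in>F. f i v)) \<in> tnull Ob S sm"
    by (rule tnull.add) (use insert in auto)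
  then show ?case by (rule tnull_ext) (use insert in simp)
qed

lemma sum_support_of_comb:
  fixes g :: "'i \<Rightarrow> 'k::comm_ring_1"
  assumes I: "finite I" and F: "\<And>x. F x = (\<Sum>i\<in>I. if x = f i then g i else 0)"
  shows "(\<Sum>x\<in>{x. F x \<noteq> 0}. F x * H x) = (\<Sum>i\<in>I. g i * H (f i))"
proof -
  have "(\<Sum>i\<in>I. g i * H (f i)) = (\<Sum>x\<in>f ` I. \<Sum>i\<in>{i\<in>I. f i = x}. g i * H (f i))"
    using I by (rule sum.image_gen)
  also have "\<dots> = (\<Sum>x\<in>f ` I. F x * H x)"
  proof (rule sum.cong[OF refl])
    fix x
    have "(\<Sum>i\<in>{i\<in>I. f i = x}. g i * H (f i)) = (\<Sum>i\<in>{i\<in>I. f i = x}. g i) * H x"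
      by (simp add: sum_distrib_right)
    also have "(\<Sum>i\<in>{i\<in>I. f i = x}. g i) = (\<Sum>i\<in>I. if f i = x then g i else 0)"
      using I by (rule sum.inter_filter)
    also have "\<dots> = F x" unfolding F[of x] by (rule sum.cong) auto
    finally show "(\<Sum>i\<in>{i\<in>I. f i = x}. g i * H (f i)) = F x * H x" .
  qed
  also have "\<dots> = (\<Sum>x\<in>{x. F x \<noteq> 0}. F x * H x)"
  proof (rule sum.mono_neutral_right)
    show "finite (f ` I)" using I by simp
    show "{x. F x \<noteq> 0} \<subseteq> f ` I"
    proof
      fix x assume "x \<in> {x. F x \<noteq> 0}"
      then have "(\<Sum>i\<in>I. if x = f i then g i else 0) \<noteq> 0" using F[of x] by simp
      then obtain i where "i \<in> I" "(if x = f i then g i else 0) \<noteq> 0"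
        by (rule sum.not_neutral_contains_not_neutral)
      then show "x \<in> f ` I" by (auto split: if_splits)
    qed
  qed simp
  finally show ?thesis ..
qed

section \<open>Blocks of a word and insertion of \<open>b\<close>\<close>

definition blocks :: "nat \<Rightarrow> (nat \<times> nat) set" where
  "blocks L = {(q, m). 1 \<le> m \<and> q + m \<le> L}"

lemma blocks_0 [simp]: "blocks 0 = {}"
  by (auto simp: blocks_def)

lemma finite_blocks [simp]: "finite (blocks L)"
  by (rule finite_subset[of _ "{..L} \<times> {..L}"]) (auto simp: blocks_def)

lemma sum_blocks: "(\<Sum>q<L. \<Sum>m\<in>{1..L - q}. f q m) = (\<Sum>(q, m)\<in>blocks L. f q m)"
proof -
  have "blocks L = Sigma {..<L} (\<lambda>q. {1..L - q})" by (auto simp: blocks_def)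
  then show ?thesis by (simp add: sum.Sigma)
qed

lemma sum_blocks_shift:
  assumes "a + len \<le> L"
  shows "(\<Sum>(q, m)\<in>blocks len. h (q + a) m)
       = (\<Sum>(q, m)\<in>blocks L. if a \<le> q \<and> q + m \<le> a + len then h q m else 0)"
proof -
  have "(\<Sum>(q, m)\<in>blocks L. if a \<le> q \<and> q + m \<le> a + len then h q m else 0)
      = (\<Sum>(q, m)\<in>{(q, m)\<in>blocks L. a \<le> q \<and> q + m \<le> a + len}. h q m)"
    by (simp add: sum.inter_filter case_prod_unfold)
  also have "\<dots> = (\<Sum>(q, m)\<in>blocks len. h (q + a) m)"
    by (rule sum.reindex_bij_witness[where i = "\<lambda>(q, m). (q + a, m)" and j = "\<lambda>(q, m). (q - a, m)"])
      (use assms in \<open>auto simp: blocks_def\<close>)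
  finally show ?thesis ..
qed

lemma take_drop_split: "take q W @ take m (drop q W) @ drop (q + m) W = W"
  by (metis append.assoc append_take_drop_id take_add)

lemma bapp_simps [simp]:
  "esrc (bapp b X) = esrc (hd X)" "etgt (bapp b X) = etgt (last X)"
  "edeg (bapp b X) = degw X + 1" "eelt (bapp b X) = b X"
  by (simp_all add: bapp_def esrc_def etgt_def edeg_def eelt_def)

lemma ins_b_at: "ins_b b (length P) (length X) (P @ X @ T) = P @ [bapp b X] @ T"
  by (simp add: ins_b_def)

lemma ins_b_append_left: "ins_b b (length U + q) m (U @ V) = U @ ins_b b q m V"
  by (simp add: ins_b_def)

lemma ins_b_append_right: "q + m \<le> length V \<Longrightarrow> ins_b b q m (V @ Z) = ins_b b q m V @ Z"
  by (simp add: ins_b_def)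

lemma length_ins_b: "q + m \<le> length W \<Longrightarrow> 1 \<le> m \<Longrightarrow> length (ins_b b q m W) = length W - m + 1"
  by (simp add: ins_b_def)

lemma take_ins_b: "p \<le> q \<Longrightarrow> q \<le> length W \<Longrightarrow> take p (ins_b b q m W) = take p W"
  by (simp add: ins_b_def)

lemma degw_ins_b: "degw (ins_b b q m W) = degw W + 1"
  by (subst (2) take_drop_split[symmetric, where q = q and m = m]) (simp add: ins_b_def)

lemma esrc_hd_ins_b: "(q, m) \<in> blocks (length W) \<Longrightarrow> esrc (hd (ins_b b q m W)) = esrc (hd W)"
  by (cases q) (auto simp: ins_b_def blocks_def hd_append hd_take)

lemma etgt_last_ins_b: "(q, m) \<in> blocks (length W) \<Longrightarrow> etgt (last (ins_b b q m W)) = etgt (last W)"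
  by (cases "q + m = length W") (auto simp: ins_b_def blocks_def)

lemma degw_take_ins_b:
  assumes "q < p" "q + m \<le> length W" "1 \<le> m"
  shows "degw (take p (ins_b b q m W)) = degw (take (p + m - 1) W) + 1"
proof -
  define P X T where "P = take q W" "X = take m (drop q W)" "T = drop (q + m) W"
  have W: "W = P @ X @ T" and lP: "length P = q" and lX: "length X = m"
    using assms take_drop_split[of q W m] by (simp_all add: P_X_T_def)
  have "take p (ins_b b q m W) = P @ [bapp b X] @ take (p - q - 1) T"
    using assms lP by (simp add: ins_b_def P_X_T_def take_Cons')
  moreover have "take (p + m - 1) W = P @ X @ take (p - q - 1) T"
    using W lP lX assms by (simp add: take_append)
  ultimately show ?thesis by simp
qed

lemma ins_b_commute:
  assumes "q1 < q2" "q2 + m2 \<le> length W - m1 + 1" "q1 + m1 \<le> length W" "1 \<le> m1" "1 \<le> m2"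
  shows "ins_b b q2 m2 (ins_b b q1 m1 W) = ins_b b q1 m1 (ins_b b (q2 + m1 - 1) m2 W)"
proof -
  define P X R Y T where "P = take q1 W" "X = take m1 (drop q1 W)"
    "R = take (q2 - q1 - 1) (drop (q1 + m1) W)"
    "Y = take m2 (drop (q2 + m1 - 1) W)" "T = drop (q2 + m1 - 1 + m2) W"
  have "drop (q1 + m1) W = R @ Y @ T"
    using take_drop_split[of "q2 - q1 - 1" "drop (q1 + m1) W" m2] assms
    by (simp add: P_X_R_Y_T_def add.commute add.left_commute)
  then have W: "W = P @ X @ R @ Y @ T"
    using take_drop_split[of q1 W m1] by (simp add: P_X_R_Y_T_def)
  have lP: "length P = q1" and lX: "length X = m1" and lR: "length R = q2 - q1 - 1"
    and lY: "length Y = m2"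
    using assms by (simp_all add: P_X_R_Y_T_def)
  have "ins_b b q2 m2 (ins_b b q1 m1 W) = ins_b b q2 m2 ((P @ [bapp b X] @ R) @ Y @ T)"
    using ins_b_at[of b P X "R @ Y @ T"] unfolding W lP lX by simp
  also have "\<dots> = P @ [bapp b X] @ R @ [bapp b Y] @ T"
    using ins_b_at[of b "P @ [bapp b X] @ R" Y T] lP lR lY assms by simp
  also have "\<dots> = ins_b b q1 m1 (P @ X @ R @ [bapp b Y] @ T)"
    using ins_b_at[of b P X "R @ [bapp b Y] @ T"] unfolding lP lX by simp
  also have "P @ X @ R @ [bapp b Y] @ T = ins_b b (q2 + m1 - 1) m2 W"
    using ins_b_at[of b "P @ X @ R" Y T] lP lX lR lY assms unfolding W by (simp add: add.commute)
  finally show ?thesis .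
qed

lemma ins_b_nested:
  assumes "i + m \<le> M" "Q + M \<le> length W" "1 \<le> m"
  shows "ins_b b Q (M - m + 1) (ins_b b (Q + i) m W)
       = take Q W @ [bapp b (ins_b b i m (take M (drop Q W)))] @ drop (Q + M) W"
proof -
  define J P T where "J = take M (drop Q W)" "P = take Q W" "T = drop (Q + M) W"
  define X1 Xm X2 where "X1 = take i J" "Xm = take m (drop i J)" "X2 = drop (i + m) J"
  have W: "W = P @ (X1 @ Xm @ X2) @ T"
    using take_drop_split[of Q W M] take_drop_split[of i J m] by (simp add: J_P_T_def X1_Xm_X2_def)
  have lJ: "length J = M" using assms by (simp add: J_P_T_def)
  have lP: "length P = Q" and l1: "length X1 = i" and lm: "length Xm = m"
    and l2: "length X2 = M - i - m"
    using assms lJ by (simp_all add: J_P_T_def X1_Xm_X2_def)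
  have "ins_b b (Q + i) m W = P @ (X1 @ [bapp b Xm] @ X2) @ T"
    using ins_b_at[of b "P @ X1" Xm "X2 @ T"] W lP l1 lm by simp
  moreover have "ins_b b i m J = X1 @ [bapp b Xm] @ X2"
    using ins_b_at[of b X1 Xm X2] take_drop_split[of i J m] l1 lm by (simp add: X1_Xm_X2_def)
  moreover have "length (X1 @ [bapp b Xm] @ X2) = M - m + 1" using l1 lm l2 assms by simp
  ultimately show ?thesis
    using ins_b_at[of b P "X1 @ [bapp b Xm] @ X2" T] lP by (simp add: J_P_T_def)
qed

section \<open>The maps \<open>bar b\<^sub>n\<close> as sums over blocks\<close>

lemma bbar_block_sum:
  assumes ws: "ws \<noteq> []"
  shows "bbar b ws v = (\<Sum>(q, m)\<in>blocks (length (concat ws)).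
     if q < length (hd ws) \<and> length (concat ws) - length (last ws) < q + m \<and> v = ins_b b q m (concat ws)
     then ksign (degw (take q (concat ws))) else 0)"
proof -
  define W L k l where "W = concat ws" "L = length W" "k = length (hd ws)" "l = length (last ws)"
  have kL: "k \<le> L" using ws by (cases ws) (simp_all add: W_L_k_l_def)
  let ?f = "\<lambda>q m. if v = ins_b b q m W then ksign (degw (take q W)) else 0"
  have "bbar b ws v = (\<Sum>(q, m)\<in>blocks L. if q < k \<and> L - l < q + m then ?f q m else 0)"
  proof (cases "length ws = 1")
    case True
    then obtain w where ws1: "ws = [w]" by (cases ws) auto
    have "bbar b ws v = (\<Sum>q<L. \<Sum>m\<in>{1..L - q}. ?f q m)"
      unfolding bbar_def Let_def W_L_k_l_def using ws1 by simp
    also have "\<dots> = (\<Sum>(q, m)\<in>blocks L. ?f q m)"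
      by (rule sum_blocks)
    also have "\<dots> = (\<Sum>(q, m)\<in>blocks L. if q < k \<and> L - l < q + m then ?f q m else 0)"
      by (rule sum.cong) (auto simp: blocks_def W_L_k_l_def ws1)
    finally show ?thesis .
  next
    case False
    have "bbar b ws v = (\<Sum>q<k. \<Sum>m\<in>{m. 1 \<le> m \<and> q + m \<le> L \<and> L - (q + m) < l}. ?f q m)"
      unfolding bbar_def Let_def W_L_k_l_def using ws False by simp
    also have "\<dots> = (\<Sum>(q, m)\<in>Sigma {..<k} (\<lambda>q. {m. 1 \<le> m \<and> q + m \<le> L \<and> L - (q + m) < l}). ?f q m)"
      by (rule sum.Sigma) (auto intro: finite_subset[of _ "{..L}"])
    also have "Sigma {..<k} (\<lambda>q. {m. 1 \<le> m \<and> q + m \<le> L \<and> L - (q + m) < l})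
       = {x \<in> blocks L. fst x < k \<and> L - l < fst x + snd x}"
      using kL by (auto simp: blocks_def)
    also have "(\<Sum>(q, m)\<in>{x \<in> blocks L. fst x < k \<and> L - l < fst x + snd x}. ?f q m)
       = (\<Sum>(q, m)\<in>blocks L. if q < k \<and> L - l < q + m then ?f q m else 0)"
      by (simp add: sum.inter_filter case_prod_unfold)
    finally show ?thesis .
  qed
  then show ?thesis
    unfolding W_L_k_l_def by (simp add: if_if_eq_conj conj_assoc)
qed

lemma bbar_single_word: "bbar b [V] v = (\<Sum>(q, m)\<in>blocks (length V).
     if v = ins_b b q m V then ksign (degw (take q V)) else 0)"
  by (subst bbar_block_sum) (auto simp: blocks_def intro!: sum.cong)

lemma embed_bbar_single_word: "embed U (bbar b [V]) Z v = (\<Sum>(q, m)\<in>blocks (length V).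
     if v = U @ ins_b b q m V @ Z then ksign (degw (take q V)) else (0::'k::comm_ring_1))"
proof -
  have "embed U (bbar b [V]) Z v
      = (\<Sum>i\<in>blocks (length V). ksign (degw (take (fst i) V)) * single (U @ ins_b b (fst i) (snd i) V @ Z) v)"
    unfolding embed_def by (rule sum_support_of_comb) (auto simp: bbar_single_word case_prod_unfold)
  also have "\<dots> = (\<Sum>(q, m)\<in>blocks (length V).
     if v = U @ ins_b b q m V @ Z then ksign (degw (take q V)) else 0)"
    by (rule sum.cong) (auto simp: single_def)
  finally show ?thesis .
qed

lemma signed_embed_bbar_single_word:
  "(ksign (degw U) :: 'k::comm_ring_1) * embed U (bbar b [V]) Z v
   = (\<Sum>(q, m)\<in>blocks (length (U @ V @ Z)).
       if length U \<le> q \<and> q + m \<le> length U + length V \<and> v = ins_b b q m (U @ V @ Z)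
       then ksign (degw (take q (U @ V @ Z))) else 0)"
proof -
  let ?W = "U @ V @ Z"
  let ?h = "\<lambda>q m. if v = ins_b b q m ?W then ksign (degw (take q ?W)) else (0::'k)"
  have "(ksign (degw U) :: 'k) * embed U (bbar b [V]) Z v = (\<Sum>(q, m)\<in>blocks (length V). ?h (q + length U) m)"
    unfolding embed_bbar_single_word sum_distrib_left case_prod_unfold
  proof (rule sum.cong[OF refl])
    fix x assume x: "x \<in> blocks (length V)"
    obtain q m where [simp]: "x = (q, m)" by (cases x)
    have "U @ ins_b b q m V @ Z = ins_b b (q + length U) m ?W"
      using x ins_b_append_left[of b U q m "V @ Z"] ins_b_append_right[of q m V b Z]
      by (simp add: blocks_def add.commute)
    then show "ksign (degw U) * (if v = U @ ins_b b (fst x) (snd x) V @ Z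
        then ksign (degw (take (fst x) V)) else 0) = ?h (fst x + length U) (snd x)"
      using x by (simp add: ksign_add blocks_def)
  qed
  also have "\<dots> = (\<Sum>(q, m)\<in>blocks (length ?W). if length U \<le> q \<and> q + m \<le> length U + length V
      then ?h q m else 0)"
    by (rule sum_blocks_shift) simp
  finally show ?thesis
    by (simp add: if_if_eq_conj conj_assoc)
qed

lemma embed_Nil_bbar_single_word:
  fixes V Z :: "('o, 'm) word"
  shows "(embed [] (bbar b [V]) Z v :: 'k::comm_ring_1) = (\<Sum>(q, m)\<in>blocks (length (V @ Z)).
     if q + m \<le> length V \<and> v = ins_b b q m (V @ Z) then ksign (degw (take q (V @ Z))) else 0)"
proof -
  have "(embed [] (bbar b [V]) Z v :: 'k)
      = ksign (degw ([] :: ('o, 'm) word)) * embed [] (bbar b [V]) Z v"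
    by (simp add: ksign_def)
  then show ?thesis
    unfolding signed_embed_bbar_single_word append_Nil by simp
qed

lemma concat_hd_middle_last:
  assumes "2 \<le> length ws"
  shows "concat ws = hd ws @ concat (butlast (tl ws)) @ last ws"
    and "concat (tl ws) = concat (butlast (tl ws)) @ last ws"
    and "concat (butlast ws) = hd ws @ concat (butlast (tl ws))"
proof -
  obtain x ys where ws: "ws = x # ys" and "ys \<noteq> []" using assms by (cases ws) (auto simp: Suc_le_length_iff)
  then obtain zs y where "ys = zs @ [y]" by (cases ys rule: rev_cases) auto
  then show "concat ws = hd ws @ concat (butlast (tl ws)) @ last ws"
    and "concat (tl ws) = concat (butlast (tl ws)) @ last ws"
    and "concat (butlast ws) = hd ws @ concat (butlast (tl ws))"
    by (simp_all add: ws butlast_append)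
qed

text \<open>Inclusion--exclusion: a block starts in the first and ends in the last word of \<open>ws\<close>
  unless it lies within the tail or within the front, and it lies within both exactly when it
  lies within the middle words.\<close>

lemma bbar_mu_expansion:
  fixes ws :: "('o, 'm) word list"
  assumes len: "2 \<le> length ws"
  shows "(bbar b ws v :: 'k::comm_ring_1)
       = bbar b [concat ws] v
         - ksign (degw (hd ws)) * embed (hd ws) (bbar b [concat (tl ws)]) [] v
         - embed [] (bbar b [concat (butlast ws)]) (last ws) v
         + (if length ws \<ge> 3
            then ksign (degw (hd ws)) * embed (hd ws) (bbar b [concat (butlast (tl ws))]) (last ws) v
            else 0)"
proof -
  define U M Z where "U = hd ws" "M = concat (butlast (tl ws))" "Z = last ws"
  define W where "W = U @ M @ Z"
  note split = concat_hd_middle_last[OF len, folded U_M_Z_def]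
  have ws: "ws \<noteq> []" using len by auto
  have first_last: "bbar b ws v = (\<Sum>(q, m)\<in>blocks (length W).
      if q < length U \<and> length U + length M < q + m \<and> v = ins_b b q m W
      then ksign (degw (take q W)) else (0::'k))"
    unfolding bbar_block_sum[OF ws] split(1) U_M_Z_def[symmetric] W_def[symmetric]
    by (rule sum.cong) (auto simp: W_def)
  have all: "bbar b [concat ws] v = (\<Sum>(q, m)\<in>blocks (length W).
      if v = ins_b b q m W then ksign (degw (take q W)) else (0::'k))"
    unfolding bbar_single_word split(1) W_def ..
  have "length ws < 3 \<Longrightarrow> butlast (tl ws) = []"
    by (simp flip: length_0_conv)
  then have "length ws < 3 \<Longrightarrow> M = []"
    by (simp add: U_M_Z_def)
  then have middle: "(if length ws \<ge> 3 then ksign (degw U) * embed U (bbar b [M]) Z v else 0)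
      = (ksign (degw U) :: 'k) * embed U (bbar b [M]) Z v"
    by (auto simp: embed_bbar_single_word)
  show ?thesis
    unfolding U_M_Z_def[symmetric] middle
    unfolding split(2,3) first_last all signed_embed_bbar_single_word embed_Nil_bbar_single_word W_def
    by (simp add: sum_subtractf[symmetric] sum.distrib[symmetric] case_prod_unfold)
      (rule sum.cong, auto simp: blocks_def)
qed

section \<open>Words of \<open>sD(C|B)\<close>\<close>

lemma Dword_iff_nth: "Dword B v \<longleftrightarrow> (\<forall>p. Suc p < length v \<longrightarrow> etgt (v ! p) \<in> B)"
proof -
  have "Dword B v \<longleftrightarrow> (\<forall>p < length (butlast v). etgt (butlast v ! p) \<in> B)"
    unfolding Dword_def set_map image_subset_iff by (rule all_set_conv_all_nth)
  also have "\<dots> \<longleftrightarrow> (\<forall>p. Suc p < length v \<longrightarrow> etgt (v ! p) \<in> B)"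
    by (auto simp: nth_butlast)
  finally show ?thesis .
qed

text \<open>The inner objects of the result are inner objects of \<open>W\<close> lying among its first \<open>k\<close>
  or its last \<open>l\<close> entries.\<close>

lemma Dword_ins_b:
  assumes qm: "(q, m) \<in> blocks (length W)" and k: "q < k" and l: "length W - l < q + m"
    and DW: "\<And>p. Suc p < length W \<Longrightarrow> Suc p < k \<or> length W - l \<le> p \<Longrightarrow> etgt (W ! p) \<in> B"
  shows "Dword B (ins_b b q m W)"
  unfolding Dword_iff_nth
proof (intro allI impI)
  fix p assume p: "Suc p < length (ins_b b q m W)"
  have qm': "1 \<le> m" "q + m \<le> length W" using qm by (auto simp: blocks_def)
  then have len: "length (ins_b b q m W) = length W - m + 1" by (simp add: length_ins_b)
  consider (before) "p < q" | (at) "p = q" | (after) "q < p" by linarith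
  then show "etgt (ins_b b q m W ! p) \<in> B"
  proof cases
    case before
    then show ?thesis using DW[of p] k qm' by (simp add: ins_b_def nth_append)
  next
    case at
    moreover have "last (take m (drop q W)) = W ! (q + m - 1)"
      using qm' by (cases "q + m = length W") (auto simp: last_conv_nth min_def)
    ultimately have "etgt (ins_b b q m W ! p) = etgt (W ! (q + m - 1))"
      using qm' by (simp add: ins_b_def nth_append)
    moreover have "Suc (q + m - 1) < length W" "length W - l \<le> q + m - 1"
      using at p len l qm' by auto
    ultimately show ?thesis using DW[of "q + m - 1"] by simp
  next
    case after
    then have "ins_b b q m W ! p = W ! (p + m - 1)"
      using qm' by (simp add: ins_b_def nth_append add.commute)
    moreover have "Suc (p + m - 1) < length W" "length W - l \<le> p + m - 1"
      using after p len l qm' by auto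
    ultimately show ?thesis using DW[of "p + m - 1"] by simp
  qed
qed

lemma bbar_support_Dword:
  assumes ne: "ws \<noteq> []" and D: "\<forall>w\<in>set ws. Dword B w" and nz: "bbar b ws v \<noteq> 0"
  shows "Dword B v"
proof -
  define W k l where "W = concat ws" "k = length (hd ws)" "l = length (last ws)"
  from nz obtain q m where qm: "(q, m) \<in> blocks (length W)"
    and c: "q < k" "length W - l < q + m" "v = ins_b b q m W"
    unfolding bbar_block_sum[OF ne] W_k_l_def[symmetric]
    by (auto elim!: sum.not_neutral_contains_not_neutral split: if_splits)
  obtain rest where W1: "W = hd ws @ rest" using ne by (cases ws) (auto simp: W_k_l_def)
  obtain front where W2: "W = front @ last ws"
    using ne by (cases ws rule: rev_cases) (auto simp: W_k_l_def)
  have Dh: "Dword B (hd ws)" "Dword B (last ws)" using D ne by auto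
  have "etgt (W ! p) \<in> B" if p: "Suc p < length W" "Suc p < k \<or> length W - l \<le> p" for p
  proof (cases "Suc p < k")
    case True
    then show ?thesis using Dh(1) unfolding W1 Dword_iff_nth by (simp add: nth_append W_k_l_def)
  next
    case False
    then have "length front \<le> p" using p W2 by (simp add: W_k_l_def)
    then show ?thesis using Dh(2) p W2 unfolding W2 Dword_iff_nth
      by (simp add: nth_append W_k_l_def)
  qed
  then show "Dword B v" using c qm by (auto intro: Dword_ins_b)
qed

section \<open>Well-formed words and multilinearity\<close>

definition entry_ok :: "'o set \<Rightarrow> ('o \<Rightarrow> 'o \<Rightarrow> int \<Rightarrow> 'm set) \<Rightarrow> ('o, 'm) ent \<Rightarrow> bool" where
  "entry_ok Ob S e \<longleftrightarrow> esrc e \<in> Ob \<and> etgt e \<in> Ob \<and> eelt e \<in> S (esrc e) (etgt e) (edeg e)"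

abbreviation chained :: "('o, 'm) word \<Rightarrow> bool" where
  "chained \<equiv> successively (\<lambda>e e'. etgt e = esrc e')"

lemma wf_word_iff: "wf_word Ob S w \<longleftrightarrow> w \<noteq> [] \<and> (\<forall>e\<in>set w. entry_ok Ob S e) \<and> chained w"
  unfolding wf_word_def entry_ok_def successively_conv_nth by blast

lemma wf_word_append:
  "u \<noteq> [] \<Longrightarrow> v \<noteq> [] \<Longrightarrow>
    wf_word Ob S (u @ v) \<longleftrightarrow> wf_word Ob S u \<and> wf_word Ob S v \<and> etgt (last u) = esrc (hd v)"
  unfolding wf_word_iff successively_append_iff by auto

lemma wf_word_replace_block:
  assumes "wf_word Ob S (u @ X @ v)" "X \<noteq> []" "wf_word Ob S Y"
    and "esrc (hd Y) = esrc (hd X)" "etgt (last Y) = etgt (last X)"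
  shows "wf_word Ob S (u @ Y @ v)"
  using assms unfolding wf_word_iff by (auto simp: successively_append_iff)

lemma wf_word_block:
  assumes W: "wf_word Ob S W" and qm: "(q, m) \<in> blocks (length W)"
  shows "wf_word Ob S (take m (drop q W))"
  using assms unfolding wf_word_def blocks_def
  by (auto dest: in_set_takeD in_set_dropD)

lemma ainf_cat_closed:
  assumes "ainf_cat Ob S sm b"
  shows "0 \<in> S X Y d"
    and "x \<in> S X Y d \<Longrightarrow> y \<in> S X Y d \<Longrightarrow> x + y \<in> S X Y d"
    and "x \<in> S X Y d \<Longrightarrow> sm c x \<in> S X Y d"
    and "wf_word Ob S w \<Longrightarrow> b w \<in> S (esrc (hd w)) (etgt (last w)) (degw w + 1)"
  using assms unfolding ainf_cat_def by simp_all

lemma ainf_cat_relation: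
  "ainf_cat Ob S sm b \<Longrightarrow> wf_word Ob S w \<Longrightarrow>
    (\<Sum>r<length w. \<Sum>n\<in>{1..length w - r}. sm (ksign (degw (take r w))) (b (ins_b b r n w))) = 0"
  unfolding ainf_cat_def by simp

lemma wf_word_bapp:
  assumes C: "ainf_cat Ob S sm b" and X: "wf_word Ob S X"
  shows "wf_word Ob S [bapp b X]"
  using ainf_cat_closed(4)[OF C X] X unfolding wf_word_iff entry_ok_def by auto

lemma wf_word_ins_b:
  assumes C: "ainf_cat Ob S sm b" and W: "wf_word Ob S W" and qm: "(q, m) \<in> blocks (length W)"
  shows "wf_word Ob S (ins_b b q m W)"
proof -
  define X where "X = take m (drop q W)"
  have "wf_word Ob S (take q W @ [bapp b X] @ drop (q + m) W)"
  proof (rule wf_word_replace_block)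
    show "wf_word Ob S (take q W @ X @ drop (q + m) W)"
      unfolding X_def take_drop_split by (rule W)
    show "wf_word Ob S [bapp b X]"
      unfolding X_def by (rule wf_word_bapp[OF C wf_word_block[OF W qm]])
  qed (use qm in \<open>auto simp: X_def blocks_def\<close>)
  then show ?thesis by (simp add: ins_b_def X_def)
qed

lemma wf_word_concat:
  assumes "composable Ob S ws"
  shows "wf_word Ob S (concat ws)"
  using assms unfolding composable_def
proof (induction ws)
  case (Cons w ws)
  show ?case
  proof (cases "ws = []")
    case False
    have IH: "wf_word Ob S (concat ws)"
      using Cons False by (metis Suc_less_eq length_Cons list.set_intros(2) nth_Cons_Suc)
    have "wf_word Ob S w" "etgt (last w) = esrc (hd (hd ws))"
      using Cons.prems False by (auto simp: hd_conv_nth)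
    moreover have "hd ws \<noteq> []" using Cons.prems False by (auto simp: wf_word_def)
    ultimately show ?thesis
      using IH False wf_word_append[of w "concat ws" Ob S] by (cases ws) (auto simp: wf_word_def)
  qed (use Cons.prems in simp)
qed simp

lemma tnull_single_zero:
  assumes "wf_word Ob S (u @ [(X, Y, d, 0)] @ w)"
  shows "(\<lambda>v. single (u @ [(X, Y, d, 0)] @ w) v :: 'k::comm_ring_1) \<in> tnull Ob S sm"
proof -
  have "(\<lambda>v. single (u @ [(X, Y, d, 0 + 0)] @ w) v - single (u @ [(X, Y, d, 0)] @ w) v
      - single (u @ [(X, Y, d, 0)] @ w) v :: 'k) \<in> tnull Ob S sm"
    by (rule tnull.gen_add) (use assms in simp_all)
  from tnull_uminus[OF this] show ?thesis by (rule tnull_ext) simp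
qed

lemma ainf_cat_lincomb_mem:
  assumes C: "ainf_cat Ob S sm b" and "finite J" and "\<And>i. i \<in> J \<Longrightarrow> x i \<in> S X Y d"
  shows "(\<Sum>i\<in>J. sm (c i) (x i)) \<in> S X Y d"
  using assms(2,3) by (induction J rule: finite_induct) (auto intro: ainf_cat_closed[OF C])

lemma tnull_collect_slot:
  fixes c :: "'i \<Rightarrow> 'k::comm_ring_1" and x :: "'i \<Rightarrow> 'm::ab_group_add"
  assumes C: "ainf_cat Ob S sm b" and J: "finite J" and xS: "\<And>i. i \<in> J \<Longrightarrow> x i \<in> S X Y d"
    and wf: "\<And>y. y \<in> S X Y d \<Longrightarrow> wf_word Ob S (u @ [(X, Y, d, y)] @ w)"
  shows "(\<lambda>v. (\<Sum>i\<in>J. if v = u @ [(X, Y, d, x i)] @ w then c i else 0)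
      - single (u @ [(X, Y, d, \<Sum>i\<in>J. sm (c i) (x i))] @ w) v) \<in> tnull Ob S sm"
  using J xS
proof (induction J rule: finite_induct)
  case empty
  have "(\<lambda>v. single (u @ [(X, Y, d, 0)] @ w) v :: 'k) \<in> tnull Ob S sm"
    by (rule tnull_single_zero[OF wf[OF ainf_cat_closed(1)[OF C]]])
  from tnull_uminus[OF this] show ?case by (rule tnull_ext) simp
next
  case (insert j J)
  let ?e = "\<lambda>y. u @ [(X, Y, d, y)] @ w"
  let ?p = "sm (c j) (x j)" and ?q = "\<Sum>i\<in>J. sm (c i) (x i)"
  have xj: "x j \<in> S X Y d" and pS: "?p \<in> S X Y d"
    using insert ainf_cat_closed(3)[OF C] by auto
  have qS: "?q \<in> S X Y d"
    by (rule ainf_cat_lincomb_mem[OF C insert(1)]) (use insert in auto)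
  have IH: "(\<lambda>v. (\<Sum>i\<in>J. if v = ?e (x i) then c i else 0) - single (?e ?q) v) \<in> tnull Ob S sm"
    using insert by simp
  have add: "(\<lambda>v. single (?e (?p + ?q)) v - single (?e ?p) v - single (?e ?q) v :: 'k) \<in> tnull Ob S sm"
    by (rule tnull.gen_add) (use wf pS qS in auto)
  have smul: "(\<lambda>v. single (?e ?p) v - c j * single (?e (x j)) v) \<in> tnull Ob S sm"
    by (rule tnull.gen_smul) (use wf xj in auto)
  have "(\<lambda>v. ((\<Sum>i\<in>J. if v = ?e (x i) then c i else 0) - single (?e ?q) v)
      - (single (?e ?p) v - c j * single (?e (x j)) v)
      - (single (?e (?p + ?q)) v - single (?e ?p) v - single (?e ?q) v)) \<in> tnull Ob S sm"
    by (rule tnull_diff[OF tnull_diff[OF IH smul] add])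
  then show ?case by (rule tnull_ext) (use insert in \<open>simp add: single_def\<close>)
qed

lemma tnull_slot_relation:
  fixes c :: "'i \<Rightarrow> 'k::comm_ring_1" and x :: "'i \<Rightarrow> 'm::ab_group_add"
  assumes C: "ainf_cat Ob S sm b" and I: "finite I" and xS: "\<And>i. i \<in> I \<Longrightarrow> x i \<in> S X Y d"
    and wf: "\<And>y. y \<in> S X Y d \<Longrightarrow> wf_word Ob S (u @ [(X, Y, d, y)] @ w)"
    and rel: "(\<Sum>i\<in>I. sm (c i) (x i)) = 0"
  shows "(\<lambda>v. \<Sum>i\<in>I. if v = u @ [(X, Y, d, x i)] @ w then c i else 0) \<in> tnull Ob S sm"
proof -
  let ?e0 = "u @ [(X, Y, d, 0)] @ w"
  have "(\<lambda>v. (\<Sum>i\<in>I. if v = u @ [(X, Y, d, x i)] @ w then c i else 0) - single ?e0 v)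
      \<in> tnull Ob S sm"
    using tnull_collect_slot[where x = x and c = c, OF C I xS wf] rel by simp
  moreover have "(\<lambda>v. single ?e0 v :: 'k) \<in> tnull Ob S sm"
    by (rule tnull_single_zero[OF wf[OF ainf_cat_closed(1)[OF C]]])
  ultimately have "(\<lambda>v. ((\<Sum>i\<in>I. if v = u @ [(X, Y, d, x i)] @ w then c i else 0) - single ?e0 v)
      + single ?e0 v) \<in> tnull Ob S sm"
    by (rule tnull.add)
  then show ?thesis by simp
qed

text \<open>Inserting \<open>b\<close> around all the terms of the \<open>A\<^sub>\<infinity>\<close>-relation on a block \<open>J\<close> of \<open>W\<close> gives
  zero in \<open>T\<^sup>+ sC\<close>, by multilinearity of \<open>T\<^sup>+ sC\<close> in the entry \<open>b(\<dots>)\<close>.\<close>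

lemma tnull_nested_relation:
  assumes C: "ainf_cat Ob S sm b" and W: "wf_word Ob S W" and QM: "(Q, M) \<in> blocks (length W)"
  shows "(\<lambda>v. \<Sum>(i, m)\<in>blocks M.
      if v = take Q W @ [bapp b (ins_b b i m (take M (drop Q W)))] @ drop (Q + M) W
      then ksign (degw (take i (take M (drop Q W)))) else (0::'k::comm_ring_1)) \<in> tnull Ob S sm"
proof -
  define J u w where "J = take M (drop Q W)" "u = take Q W" "w = drop (Q + M) W"
  have WJ: "W = u @ J @ w" using take_drop_split[of Q W M] by (simp add: J_u_w_def)
  have wJ: "wf_word Ob S J" unfolding J_u_w_def by (rule wf_word_block[OF W QM])
  have lJ: "length J = M" using QM by (auto simp: J_u_w_def blocks_def)
  have neJ: "J \<noteq> []" using wJ by (simp add: wf_word_def)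
  define X Y d where "X = esrc (hd J)" "Y = etgt (last J)" "d = degw J + 2"
  have XY: "X \<in> Ob" "Y \<in> Ob" using wJ neJ unfolding wf_word_iff entry_ok_def X_Y_d_def by auto
  have ent: "bapp b (ins_b b i m J) = (X, Y, d, b (ins_b b i m J))" if "(i, m) \<in> blocks M" for i m
    using that lJ by (simp add: bapp_def esrc_hd_ins_b etgt_last_ins_b degw_ins_b X_Y_d_def)
  have xS: "b (ins_b b (fst p) (snd p) J) \<in> S X Y d" if "p \<in> blocks M" for p
  proof -
    have p: "(fst p, snd p) \<in> blocks (length J)" using that lJ by simp
    show ?thesis
      using ainf_cat_closed(4)[OF C wf_word_ins_b[OF C wJ p]]
      unfolding esrc_hd_ins_b[OF p] etgt_last_ins_b[OF p] degw_ins_b X_Y_d_def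
      by (simp add: add.assoc)
  qed
  have wf: "wf_word Ob S (u @ [(X, Y, d, y)] @ w)" if "y \<in> S X Y d" for y
  proof (rule wf_word_replace_block[of Ob S u J w])
    show "wf_word Ob S (u @ J @ w)" using W WJ by simp
    show "wf_word Ob S [(X, Y, d, y)]"
      using XY that by (simp add: wf_word_iff entry_ok_def esrc_def etgt_def edeg_def eelt_def)
  qed (use neJ in \<open>simp_all add: X_Y_d_def esrc_def etgt_def\<close>)
  have rel: "(\<Sum>p\<in>blocks M. sm (ksign (degw (take (fst p) J))) (b (ins_b b (fst p) (snd p) J))) = 0"
    using ainf_cat_relation[OF C wJ] unfolding lJ sum_blocks by (simp add: case_prod_unfold)
  have "(\<lambda>v. \<Sum>p\<in>blocks M. if v = u @ [(X, Y, d, b (ins_b b (fst p) (snd p) J))] @ w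
      then ksign (degw (take (fst p) J)) else (0::'k)) \<in> tnull Ob S sm"
    by (rule tnull_slot_relation[OF C finite_blocks]) (use xS wf rel in auto)
  then show ?thesis
    unfolding J_u_w_def[symmetric]
    by (rule tnull_ext) (rule sum.cong, simp_all add: ent case_prod_unfold)
qed

section \<open>Pairs of successive insertions\<close>

definition no_cut_between :: "(nat \<Rightarrow> nat) \<Rightarrow> nat \<Rightarrow> nat \<Rightarrow> bool" where
  "no_cut_between c x y \<longleftrightarrow> (\<forall>j. x < c j \<longrightarrow> y < c j)"

text \<open>For a word \<open>W\<close> cut into \<open>N\<close> pieces at positions \<open>c 0 \<le> \<dots> \<le> c N\<close>, a term of the
  \<open>A\<^sub>\<infinity>\<close>-sum of the \<open>bar b\<^sub>n\<close> replaces first a block \<open>(q1, m1)\<close> of \<open>W\<close> and then a block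
  \<open>(q2, m2)\<close> of the result; each block must start in the first and end in the last piece of the
  tuple it is applied to. This is that condition in the coordinates of \<open>W\<close>, distinguishing
  whether the second block contains the new entry, lies to its right, or lies to its left.\<close>

definition admissible_pair :: "(nat \<Rightarrow> nat) \<Rightarrow> nat \<Rightarrow> nat \<Rightarrow> nat \<Rightarrow> nat \<Rightarrow> nat \<Rightarrow> bool" where
  "admissible_pair c N q1 m1 q2 m2 =
    (if q2 \<le> q1 \<and> q1 < q2 + m2 then q2 < c 1 \<and> c (N - 1) < q2 + m2 + m1 - 1
     else if q1 < q2 then
       q1 < c 1 \<and> no_cut_between c (q1 + m1 - 1) (q2 + m1 - 1) \<and> c (N - 1) < q2 + m2 + m1 - 1
     else q2 < c 1 \<and> c (N - 1) < q1 + m1 \<and> no_cut_between c (q2 + m2 - 1) q1)"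

definition block_pairs :: "nat \<Rightarrow> ((nat \<times> nat) \<times> (nat \<times> nat)) set" where
  "block_pairs L = Sigma (blocks L) (\<lambda>p. blocks (L - snd p + 1))"

definition pair_term :: "(('o, 'm) word \<Rightarrow> 'm) \<Rightarrow> ('o, 'm) word \<Rightarrow> (nat \<Rightarrow> nat) \<Rightarrow> nat
    \<Rightarrow> ('o, 'm) word \<Rightarrow> (nat \<times> nat) \<times> (nat \<times> nat) \<Rightarrow> 'k::comm_ring_1" where
  "pair_term b W c N v x = (case x of ((q1, m1), (q2, m2)) \<Rightarrow>
     if admissible_pair c N q1 m1 q2 m2 \<and> v = ins_b b q2 m2 (ins_b b q1 m1 W)
     then ksign (degw (take q1 W)) * ksign (degw (take q2 (ins_b b q1 m1 W))) else 0)"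

definition nested_term :: "(('o, 'm) word \<Rightarrow> 'm) \<Rightarrow> ('o, 'm) word \<Rightarrow> (nat \<Rightarrow> nat) \<Rightarrow> nat
    \<Rightarrow> ('o, 'm) word \<Rightarrow> (nat \<times> nat) \<times> (nat \<times> nat) \<Rightarrow> 'k::comm_ring_1" where
  "nested_term b W c N v x = (case x of ((Q, M), (i, m)) \<Rightarrow>
     if Q < c 1 \<and> c (N - 1) < Q + M
        \<and> v = take Q W @ [bapp b (ins_b b i m (take M (drop Q W)))] @ drop (Q + M) W
     then ksign (degw (take i (take M (drop Q W)))) else 0)"

lemma finite_block_pairs [simp]: "finite (block_pairs L)"
  by (simp add: block_pairs_def)

lemma mem_block_pairs_iff:
  "((q1, m1), (q2, m2)) \<in> block_pairs L \<longleftrightarrow>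
     1 \<le> m1 \<and> q1 + m1 \<le> L \<and> 1 \<le> m2 \<and> q2 + m2 \<le> L - m1 + 1"
  by (auto simp: block_pairs_def blocks_def)

text \<open>Disjoint blocks can be replaced in either order; the two orders differ by the Koszul sign
  of moving one \<open>b\<close> past the other, so the pairs with the second block to the right cancel
  those with the second block to the left.\<close>

lemma sum_disjoint_pairs_cancel:
  fixes b :: "('o, 'm) word \<Rightarrow> 'm"
  shows "(\<Sum>x\<in>{x\<in>block_pairs (length W). fst (fst x) < fst (snd x)}. (pair_term b W c N v x :: 'k::comm_ring_1))
       = - (\<Sum>x\<in>{x\<in>block_pairs (length W). snd (snd x) + fst (snd x) \<le> fst (fst x)}. pair_term b W c N v x)"
proof -
  let ?L = "length W"
  have "(\<Sum>x\<in>{x\<in>block_pairs ?L. fst (fst x) < fst (snd x)}. (pair_term b W c N v x :: 'k))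
     = (\<Sum>x\<in>{x\<in>block_pairs ?L. snd (snd x) + fst (snd x) \<le> fst (fst x)}. - pair_term b W c N v x)"
  proof (rule sum.reindex_bij_witness[where j = "\<lambda>((q1, m1), (q2, m2)). ((q2 + m1 - 1, m2), (q1, m1))"
        and i = "\<lambda>((a, ma), (bq, mb)). ((bq, mb), (a - mb + 1, ma))"])
    fix x assume x: "x \<in> {x\<in>block_pairs ?L. fst (fst x) < fst (snd x)}"
    obtain q1 m1 q2 m2 where xe: "x = ((q1, m1), (q2, m2))" by (metis prod.exhaust)
    have h: "q1 < q2" "1 \<le> m1" "q1 + m1 \<le> ?L" "1 \<le> m2" "q2 + m2 \<le> ?L - m1 + 1"
      using x by (auto simp: xe mem_block_pairs_iff)
    show "(\<lambda>((a, ma), (bq, mb)). ((bq, mb), (a - mb + 1, ma)))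
        ((\<lambda>((q1, m1), (q2, m2)). ((q2 + m1 - 1, m2), (q1, m1))) x) = x"
      using h by (simp add: xe)
    show "(\<lambda>((q1, m1), (q2, m2)). ((q2 + m1 - 1, m2), (q1, m1))) x
        \<in> {x\<in>block_pairs ?L. snd (snd x) + fst (snd x) \<le> fst (fst x)}"
      using h by (simp add: xe mem_block_pairs_iff, arith?)
    have adm: "admissible_pair c N (q2 + m1 - 1) m2 q1 m1 = admissible_pair c N q1 m1 q2 m2"
      using h unfolding admissible_pair_def by (auto simp: add.commute add.left_commute)
    have comm: "ins_b b q1 m1 (ins_b b (q2 + m1 - 1) m2 W) = ins_b b q2 m2 (ins_b b q1 m1 W)"
      using ins_b_commute[of q1 q2 m2 W m1 b] h by simp
    have s1: "take q1 (ins_b b (q2 + m1 - 1) m2 W) = take q1 W"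
      using h by (intro take_ins_b) auto
    have s2: "degw (take q2 (ins_b b q1 m1 W)) = degw (take (q2 + m1 - 1) W) + 1"
      using h by (intro degw_take_ins_b) auto
    show "- pair_term b W c N v ((\<lambda>((q1, m1), (q2, m2)). ((q2 + m1 - 1, m2), (q1, m1))) x)
        = (pair_term b W c N v x :: 'k)"
      unfolding xe pair_term_def prod.case adm comm s1 s2 ksign_add_one by (simp add: mult.commute)
  next
    fix y assume y: "y \<in> {x\<in>block_pairs ?L. snd (snd x) + fst (snd x) \<le> fst (fst x)}"
    obtain a ma bq mb where ye: "y = ((a, ma), (bq, mb))" by (metis prod.exhaust)
    have h: "bq + mb \<le> a" "1 \<le> ma" "a + ma \<le> ?L" "1 \<le> mb" "bq + mb \<le> ?L - ma + 1"
      using y by (auto simp: ye mem_block_pairs_iff)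
    show "(\<lambda>((q1, m1), (q2, m2)). ((q2 + m1 - 1, m2), (q1, m1)))
        ((\<lambda>((a, ma), (bq, mb)). ((bq, mb), (a - mb + 1, ma))) y) = y"
      using h by (simp add: ye)
    show "(\<lambda>((a, ma), (bq, mb)). ((bq, mb), (a - mb + 1, ma))) y
        \<in> {x\<in>block_pairs ?L. fst (fst x) < fst (snd x)}"
      using h by (simp add: ye mem_block_pairs_iff, arith?)
  qed
  then show ?thesis by (simp add: sum_negf)
qed

text \<open>A pair whose second block \<open>(Q, M')\<close> contains the entry produced by the first one is the
  same as a block \<open>(Q, M)\<close> of \<open>W\<close> together with a block \<open>(i, m)\<close> of the subword
  \<open>take M (drop Q W)\<close>, where \<open>M = M' + m - 1\<close>.\<close>

lemma sum_nested_pairs_reindex: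
  fixes b :: "('o, 'm) word \<Rightarrow> 'm"
  shows "(\<Sum>x\<in>{x\<in>block_pairs (length W). fst (snd x) \<le> fst (fst x) \<and> fst (fst x) < fst (snd x) + snd (snd x)}.
            (pair_term b W c N v x :: 'k::comm_ring_1))
       = (\<Sum>e\<in>Sigma (blocks (length W)) (\<lambda>p. blocks (snd p)). nested_term b W c N v e)"
proof (rule sum.reindex_bij_witness[where j = "\<lambda>((q1, m1), (q2, m2)). ((q2, m2 + m1 - 1), (q1 - q2, m1))"
        and i = "\<lambda>((Q, M), (i, m)). ((Q + i, m), (Q, M - m + 1))"])
  let ?L = "length W"
  fix x assume x: "x \<in> {x\<in>block_pairs ?L. fst (snd x) \<le> fst (fst x) \<and> fst (fst x) < fst (snd x) + snd (snd x)}"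
  obtain q1 m1 q2 m2 where xe: "x = ((q1, m1), (q2, m2))" by (metis prod.exhaust)
  have h: "q2 \<le> q1" "q1 < q2 + m2" "1 \<le> m1" "q1 + m1 \<le> ?L" "1 \<le> m2" "q2 + m2 \<le> ?L - m1 + 1"
    using x by (auto simp: xe mem_block_pairs_iff)
  show "(\<lambda>((Q, M), (i, m)). ((Q + i, m), (Q, M - m + 1)))
      ((\<lambda>((q1, m1), (q2, m2)). ((q2, m2 + m1 - 1), (q1 - q2, m1))) x) = x"
    using h by (simp add: xe)
  show "(\<lambda>((q1, m1), (q2, m2)). ((q2, m2 + m1 - 1), (q1 - q2, m1))) x \<in> Sigma (blocks ?L) (\<lambda>p. blocks (snd p))"
    using h by (simp add: xe blocks_def, arith?)
  have adm: "admissible_pair c N q1 m1 q2 m2 = (q2 < c 1 \<and> c (N - 1) < q2 + (m2 + m1 - 1))"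
    using h unfolding admissible_pair_def by auto
  have "ins_b b q2 (m2 + m1 - 1 - m1 + 1) (ins_b b (q2 + (q1 - q2)) m1 W)
       = take q2 W @ [bapp b (ins_b b (q1 - q2) m1 (take (m2 + m1 - 1) (drop q2 W)))] @ drop (q2 + (m2 + m1 - 1)) W"
    by (rule ins_b_nested) (use h in auto)
  moreover have "m2 + m1 - 1 - m1 + 1 = m2" and "q2 + (q1 - q2) = q1" using h by auto
  ultimately have nest: "ins_b b q2 m2 (ins_b b q1 m1 W)
       = take q2 W @ [bapp b (ins_b b (q1 - q2) m1 (take (m2 + m1 - 1) (drop q2 W)))] @ drop (q2 + (m2 + m1 - 1)) W"
    by simp
  have t1: "take q2 (ins_b b q1 m1 W) = take q2 W" using h by (intro take_ins_b) auto
  have t2: "take q1 W = take q2 W @ take (q1 - q2) (drop q2 W)"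
    using h by (metis le_add_diff_inverse take_add)
  have t3: "take (q1 - q2) (take (m2 + m1 - 1) (drop q2 W)) = take (q1 - q2) (drop q2 W)"
    using h by (simp add: min_def)
  have sign: "(ksign (degw (take q1 W)) :: 'k) * ksign (degw (take q2 (ins_b b q1 m1 W)))
      = ksign (degw (take (q1 - q2) (take (m2 + m1 - 1) (drop q2 W))))"
    unfolding t1 t3 t2 degw_append ksign_add by (auto simp: ksign_def)
  show "nested_term b W c N v ((\<lambda>((q1, m1), (q2, m2)). ((q2, m2 + m1 - 1), (q1 - q2, m1))) x)
      = (pair_term b W c N v x :: 'k)"
    unfolding xe pair_term_def nested_term_def prod.case adm nest sign by simp
next
  let ?L = "length W"
  fix y assume y: "y \<in> Sigma (blocks ?L) (\<lambda>p. blocks (snd p))"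
  obtain Q M i m where ye: "y = ((Q, M), (i, m))" by (metis prod.exhaust)
  have h: "1 \<le> M" "Q + M \<le> ?L" "1 \<le> m" "i + m \<le> M"
    using y by (auto simp: ye blocks_def)
  show "(\<lambda>((q1, m1), (q2, m2)). ((q2, m2 + m1 - 1), (q1 - q2, m1)))
      ((\<lambda>((Q, M), (i, m)). ((Q + i, m), (Q, M - m + 1))) y) = y"
    using h by (simp add: ye)
  show "(\<lambda>((Q, M), (i, m)). ((Q + i, m), (Q, M - m + 1))) y
      \<in> {x\<in>block_pairs ?L. fst (snd x) \<le> fst (fst x) \<and> fst (fst x) < fst (snd x) + snd (snd x)}"
    using h by (simp add: ye mem_block_pairs_iff, arith?)
qed

lemma sum_pair_terms_eq_nested:
  fixes b :: "('o, 'm) word \<Rightarrow> 'm"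
  shows "(\<Sum>x\<in>block_pairs (length W). (pair_term b W c N v x :: 'k::comm_ring_1))
     = (\<Sum>(Q, M)\<in>blocks (length W). if Q < c 1 \<and> c (N - 1) < Q + M then
         (\<Sum>(i, m)\<in>blocks M.
            if v = take Q W @ [bapp b (ins_b b i m (take M (drop Q W)))] @ drop (Q + M) W
            then ksign (degw (take i (take M (drop Q W)))) else 0) else 0)"
proof -
  let ?L = "length W" and ?g = "pair_term b W c N v :: _ \<Rightarrow> 'k"
  let ?nested = "\<lambda>x::(nat \<times> nat) \<times> (nat \<times> nat). fst (snd x) \<le> fst (fst x) \<and> fst (fst x) < fst (snd x) + snd (snd x)"
  let ?right = "\<lambda>x::(nat \<times> nat) \<times> (nat \<times> nat). fst (fst x) < fst (snd x)"
  let ?left = "\<lambda>x::(nat \<times> nat) \<times> (nat \<times> nat). snd (snd x) + fst (snd x) \<le> fst (fst x)"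
  have "(\<Sum>x\<in>block_pairs ?L. ?g x)
     = (\<Sum>x\<in>block_pairs ?L. (if ?nested x then ?g x else 0) + (if ?right x then ?g x else 0)
         + (if ?left x then ?g x else 0))"
    by (rule sum.cong) auto
  also have "\<dots> = (\<Sum>x\<in>{x\<in>block_pairs ?L. ?nested x}. ?g x) + (\<Sum>x\<in>{x\<in>block_pairs ?L. ?right x}. ?g x)
       + (\<Sum>x\<in>{x\<in>block_pairs ?L. ?left x}. ?g x)"
    by (simp add: sum.distrib sum.inter_filter)
  also have "\<dots> = (\<Sum>x\<in>{x\<in>block_pairs ?L. ?nested x}. ?g x)"
    by (simp add: sum_disjoint_pairs_cancel)
  also have "\<dots> = (\<Sum>e\<in>Sigma (blocks ?L) (\<lambda>p. blocks (snd p)). nested_term b W c N v e)"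
    by (rule sum_nested_pairs_reindex)
  also have "\<dots> = (\<Sum>QM\<in>blocks ?L. \<Sum>im\<in>blocks (snd QM). nested_term b W c N v (QM, im))"
    by (simp add: sum.Sigma)
  finally show ?thesis
    by (simp add: nested_term_def case_prod_unfold if_distrib[of "\<lambda>x. x * _"] cong: if_cong)
      (rule sum.cong, auto intro: sum.neutral)
qed

lemma tnull_sum_pair_terms:
  fixes b :: "('o, 'm::ab_group_add) word \<Rightarrow> 'm"
  assumes C: "ainf_cat Ob S sm b" and W: "wf_word Ob S W"
  shows "(\<lambda>v. \<Sum>x\<in>block_pairs (length W). (pair_term b W c N v x :: 'k::comm_ring_1)) \<in> tnull Ob S sm"
  unfolding sum_pair_terms_eq_nested
proof (rule tnull_sum[OF finite_blocks])
  fix QM assume QM: "QM \<in> blocks (length W)"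
  obtain Q M where [simp]: "QM = (Q, M)" by (cases QM)
  show "(\<lambda>v. case QM of (Q, M) \<Rightarrow> if Q < c 1 \<and> c (N - 1) < Q + M then
         (\<Sum>(i, m)\<in>blocks M.
            if v = take Q W @ [bapp b (ins_b b i m (take M (drop Q W)))] @ drop (Q + M) W
            then ksign (degw (take i (take M (drop Q W)))) else 0) else (0::'k)) \<in> tnull Ob S sm"
  proof (cases "Q < c 1 \<and> c (N - 1) < Q + M")
    case True
    then show ?thesis using tnull_nested_relation[OF C W, of Q M] QM by simp
  next
    case False
    then show ?thesis by (intro tnull_zeroI) auto
  qed
qed

section \<open>Words cut into pieces\<close>

definition block_spans :: "(nat \<Rightarrow> nat) \<Rightarrow> nat \<Rightarrow> nat \<Rightarrow> nat \<Rightarrow> nat \<Rightarrow> bool" where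
  "block_spans c r n q m \<longleftrightarrow> c r \<le> q \<and> q < c (Suc r) \<and> c (r + n - 1) < q + m \<and> q + m \<le> c (r + n)"

lemma segment_exists:
  fixes c :: "nat \<Rightarrow> nat"
  shows "c 0 \<le> p \<Longrightarrow> p < c N \<Longrightarrow> \<exists>r<N. c r \<le> p \<and> p < c (Suc r)"
proof (induction N)
  case (Suc N)
  then show ?case by (cases "p < c N") (auto intro: less_SucI)
qed simp

lemma segment_unique:
  fixes c :: "nat \<Rightarrow> nat"
  assumes "mono c" "c r \<le> p" "p < c (Suc r)" "c r' \<le> p" "p < c (Suc r')"
  shows "r = r'"
  using assms monoD[OF assms(1), of "Suc r" r'] monoD[OF assms(1), of "Suc r'" r]
  by (cases r r' rule: linorder_cases) auto

lemma block_spans_exists: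
  fixes c :: "nat \<Rightarrow> nat"
  assumes mono: "mono c" and c0: "c 0 = 0" and qm: "(q, m) \<in> blocks (c N)"
  obtains r n where "r < N" "1 \<le> n" "r + n \<le> N" "block_spans c r n q m"
proof -
  have qm': "1 \<le> m" "q + m \<le> c N" using qm by (auto simp: blocks_def)
  obtain r where r: "r < N" "c r \<le> q" "q < c (Suc r)"
    using segment_exists[of c q N] qm' c0 by auto
  have "q + m - 1 < c N" using qm' by linarith
  then obtain e where e: "e < N" "c e \<le> q + m - 1" "q + m - 1 < c (Suc e)"
    using segment_exists[of c "q + m - 1" N] c0 by auto
  have "r \<le> e"
    using monoD[OF mono, of "Suc e" r] r e qm' by (cases "r \<le> e") auto
  then show ?thesis
    using r e qm' by (intro that[of r "Suc e - r"]) (auto simp: block_spans_def)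
qed

lemma block_spans_unique:
  fixes c :: "nat \<Rightarrow> nat"
  assumes mono: "mono c" and "1 \<le> n" "1 \<le> n'" "1 \<le> m"
    and "block_spans c r n q m" "block_spans c r' n' q m"
  shows "r = r' \<and> n = n'"
proof -
  have "r = r'" by (rule segment_unique[OF mono]) (use assms in \<open>auto simp: block_spans_def\<close>)
  moreover have "r + n - 1 = r' + n' - 1"
    by (rule segment_unique[OF mono, of _ "q + m - 1"]) (use assms in \<open>auto simp: block_spans_def\<close>)
  ultimately show ?thesis using assms by auto
qed

lemma no_cut_between_iff:
  fixes c :: "nat \<Rightarrow> nat"
  assumes mono: "mono c" and x: "c e \<le> x" "x < c (Suc e)"
  shows "no_cut_between c x y \<longleftrightarrow> y < c (Suc e)"
proof
  assume "no_cut_between c x y" then show "y < c (Suc e)" using x by (simp add: no_cut_between_def)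
next
  assume y: "y < c (Suc e)"
  have "y < c j" if j: "x < c j" for j
  proof -
    have "Suc e \<le> j" using monoD[OF mono, of j e] j x by (cases "Suc e \<le> j") auto
    then show ?thesis using monoD[OF mono, of "Suc e" j] y by simp
  qed
  then show "no_cut_between c x y" by (simp add: no_cut_between_def)
qed

text \<open>Once the block \<open>(q1, m1)\<close>, spanning the pieces \<open>r, \<dots>, r + n - 1\<close>, has been replaced by
  one entry, the first piece of the new tuple has length \<open>c 1\<close>, unless \<open>r = 0\<close> and it is the
  shortened piece of length \<open>c (r + n) - c r - m1 + 1\<close>; similarly for the last piece.\<close>

lemma new_ends_iff_admissible_pair:
  fixes c :: "nat \<Rightarrow> nat"
  assumes mono: "mono c" and c0: "c 0 = 0" and cN: "c N = L"
    and rn: "r + n \<le> N" "1 \<le> n"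
    and q1: "block_spans c r n q1 m1" "1 \<le> m1"
    and q2: "1 \<le> m2" "q2 + m2 \<le> L - m1 + 1"
  shows "(q2 < (if r = 0 then c (r + n) - c r - m1 + 1 else c 1)
      \<and> (L - m1 + 1) - (if r + n = N then c (r + n) - c r - m1 + 1 else L - c (N - 1)) < q2 + m2)
     \<longleftrightarrow> admissible_pair c N q1 m1 q2 m2"
proof -
  have q1': "c r \<le> q1" "q1 < c (Suc r)" "c (r + n - 1) < q1 + m1" "q1 + m1 \<le> c (r + n)"
    using q1 by (auto simp: block_spans_def)
  have r0: "r = 0 \<Longrightarrow> q1 < c 1" using q1' by simp
  have r1: "r \<noteq> 0 \<Longrightarrow> c 1 \<le> c r" using monoD[OF mono, of 1 r] by simp
  have e1: "r + n = N \<Longrightarrow> c (N - 1) < q1 + m1" using q1' by simp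
  have e2: "r + n \<noteq> N \<Longrightarrow> c (r + n) \<le> c (N - 1)" using monoD[OF mono, of "r + n" "N - 1"] rn by simp
  have crn: "c (r + n) \<le> L" using monoD[OF mono, of "r + n" N] rn cN by simp
  have right_cut: "no_cut_between c (q1 + m1 - 1) y \<longleftrightarrow> y < c (r + n)" for y
    using no_cut_between_iff[OF mono, of "r + n - 1" "q1 + m1 - 1" y] q1' rn by auto
  have left_cut: "no_cut_between c x q1 \<longleftrightarrow> c r \<le> x" if "x < q1" for x
  proof
    assume "no_cut_between c x q1"
    then show "c r \<le> x" using q1' that by (auto simp: no_cut_between_def not_le[symmetric])
  next
    assume "c r \<le> x"
    then show "no_cut_between c x q1"
      using no_cut_between_iff[OF mono, of r x q1] q1' that by auto
  qed
  consider (nested) "q2 \<le> q1 \<and> q1 < q2 + m2" | (right) "q1 < q2" | (left) "q2 + m2 \<le> q1"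
    by linarith
  then show ?thesis
  proof cases
    case nested
    then have "admissible_pair c N q1 m1 q2 m2 \<longleftrightarrow> q2 < c 1 \<and> c (N - 1) < q2 + m2 + m1 - 1"
      by (simp add: admissible_pair_def)
    then show ?thesis
      using r0 r1 e1 e2 crn nested q1' q1(2) q2 rn c0 cN by (cases "r = 0"; cases "r + n = N") auto
  next
    case right
    then have "admissible_pair c N q1 m1 q2 m2
        \<longleftrightarrow> q1 < c 1 \<and> q2 + m1 - 1 < c (r + n) \<and> c (N - 1) < q2 + m2 + m1 - 1"
      using right unfolding admissible_pair_def right_cut by simp
    then show ?thesis
      using r0 r1 e1 e2 crn right q1' q1(2) q2 rn c0 cN by (cases "r = 0"; cases "r + n = N") auto
  next
    case left
    then have "admissible_pair c N q1 m1 q2 m2 \<longleftrightarrow> q2 < c 1 \<and> c (N - 1) < q1 + m1 \<and> c r \<le> q2 + m2 - 1"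
      using left left_cut[of "q2 + m2 - 1"] q2 by (simp add: admissible_pair_def)
    then show ?thesis
      using r0 r1 e1 e2 crn left q1' q1(2) q2 rn c0 cN by (cases "r = 0"; cases "r + n = N") auto
  qed
qed

definition cut_pos :: "('o, 'm) word list \<Rightarrow> nat \<Rightarrow> nat" where
  "cut_pos ws j = length (concat (take j ws))"

lemma mono_cut_pos: "mono (cut_pos ws)"
proof (rule monoI)
  fix i j :: nat assume "i \<le> j"
  then have "take j ws = take i ws @ take (j - i) (drop i ws)" by (metis le_add_diff_inverse take_add)
  then show "cut_pos ws i \<le> cut_pos ws j" by (simp add: cut_pos_def)
qed

lemma cut_pos_0 [simp]: "cut_pos ws 0 = 0"
  by (simp add: cut_pos_def)

lemma cut_pos_length: "cut_pos ws (length ws) = length (concat ws)"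
  by (simp add: cut_pos_def)

lemma length_nth_eq_cut_pos: "r < length ws \<Longrightarrow> length (ws ! r) = cut_pos ws (Suc r) - cut_pos ws r"
  by (simp add: cut_pos_def take_Suc_conv_app_nth)

lemma concat_window_split:
  "concat ws = concat (take r ws) @ concat (take n (drop r ws)) @ concat (drop (r + n) ws)"
  by (metis append_take_drop_id concat_append drop_drop add.commute)

lemma length_concat_window:
  "r + n \<le> length ws \<Longrightarrow> length (concat (take n (drop r ws))) = cut_pos ws (r + n) - cut_pos ws r"
  by (simp add: cut_pos_def take_add)

lemma hd_window: "r < length ws \<Longrightarrow> 1 \<le> n \<Longrightarrow> hd (take n (drop r ws)) = ws ! r"
  by (cases n) (auto simp: hd_drop_conv_nth)

lemma last_window: "r + n \<le> length ws \<Longrightarrow> 1 \<le> n \<Longrightarrow> last (take n (drop r ws)) = ws ! (r + n - 1)"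
  by (simp add: last_conv_nth)

section \<open>The \<open>A\<^sub>\<infinity>\<close>-equations for \<open>bar b\<close>\<close>

lemma bbar_slot_block_sum:
  assumes ne: "sub \<noteq> []"
  shows "bbar_slot b us (bbar b sub) ws' v = (\<Sum>(q, m)\<in>blocks (length (concat sub)).
     if q < length (hd sub) \<and> length (concat sub) - length (last sub) < q + m
     then ksign (degw (take q (concat sub))) * bbar b (us @ [ins_b b q m (concat sub)] @ ws') v
     else (0::'k::comm_ring_1))"
proof -
  let ?g = "\<lambda>p::nat \<times> nat. if fst p < length (hd sub) \<and> length (concat sub) - length (last sub) < fst p + snd p
     then ksign (degw (take (fst p) (concat sub))) else (0::'k)"
  have "bbar_slot b us (bbar b sub) ws' v
      = (\<Sum>p\<in>blocks (length (concat sub)). ?g p * bbar b (us @ [ins_b b (fst p) (snd p) (concat sub)] @ ws') v)"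
    unfolding bbar_slot_def
    by (rule sum_support_of_comb) (auto simp: bbar_block_sum[OF ne] intro: sum.cong)
  also have "\<dots> = (\<Sum>(q, m)\<in>blocks (length (concat sub)).
     if q < length (hd sub) \<and> length (concat sub) - length (last sub) < q + m
     then ksign (degw (take q (concat sub))) * bbar b (us @ [ins_b b q m (concat sub)] @ ws') v
     else 0)"
    by (rule sum.cong) auto
  finally show ?thesis .
qed

lemma ins_b_window:
  fixes ws :: "('o, 'm) word list" and b :: "('o, 'm) word \<Rightarrow> 'm"
  assumes r: "r < length ws" and n: "1 \<le> n" "r + n \<le> length ws"
    and qm: "(q, m) \<in> blocks (cut_pos ws (r + n) - cut_pos ws r)"
  defines "nws \<equiv> take r ws @ [ins_b b q m (concat (take n (drop r ws)))] @ drop (r + n) ws"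
  shows "concat nws = ins_b b (q + cut_pos ws r) m (concat ws)"
    and "length (concat nws) = length (concat ws) - m + 1"
    and "length (hd nws) = (if r = 0 then cut_pos ws (r + n) - cut_pos ws r - m + 1 else cut_pos ws 1)"
    and "length (last nws) = (if r + n = length ws then cut_pos ws (r + n) - cut_pos ws r - m + 1
           else length (concat ws) - cut_pos ws (length ws - 1))"
    and "nws \<noteq> []"
proof -
  let ?c = "cut_pos ws" and ?Win = "concat (take n (drop r ws))"
  have lWin: "length ?Win = ?c (r + n) - ?c r" using length_concat_window[OF n(2)] .
  have qm': "1 \<le> m" "q + m \<le> length ?Win" using qm lWin by (auto simp: blocks_def)
  have mono: "?c r \<le> ?c (r + n)" "?c (r + n) \<le> length (concat ws)"
    using monoD[OF mono_cut_pos, of r "r + n" ws] monoD[OF mono_cut_pos, of "r + n" "length ws" ws] n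
    by (auto simp: cut_pos_length)
  have "concat nws = concat (take r ws) @ ins_b b q m ?Win @ concat (drop (r + n) ws)"
    by (simp add: nws_def)
  also have "\<dots> = ins_b b (q + ?c r) m (concat ws)"
    using ins_b_append_left ins_b_append_right[OF qm'(2)] concat_window_split[of ws r n]
    by (metis add.commute cut_pos_def)
  finally show concat: "concat nws = ins_b b (q + ?c r) m (concat ws)" .
  show "length (concat nws) = length (concat ws) - m + 1"
    unfolding concat using qm' lWin mono by (intro length_ins_b) auto
  have lins: "length (ins_b b q m ?Win) = ?c (r + n) - ?c r - m + 1"
    using length_ins_b[OF qm'(2,1)] lWin by simp
  show "length (hd nws) = (if r = 0 then ?c (r + n) - ?c r - m + 1 else ?c 1)"
  proof (cases "r = 0")
    case False
    have "length (ws ! 0) = ?c 1" using r length_nth_eq_cut_pos[of 0 ws] by (cases ws) auto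
    then show ?thesis using False r by (simp add: nws_def hd_conv_nth nth_append)
  qed (use lins in \<open>simp add: nws_def\<close>)
  show "length (last nws) = (if r + n = length ws then ?c (r + n) - ?c r - m + 1
           else length (concat ws) - ?c (length ws - 1))"
  proof (cases "r + n = length ws")
    case False
    then have "drop (r + n) ws \<noteq> []" using n by simp
    then have "last nws = last ws" by (simp add: nws_def)
    also have "\<dots> = ws ! (length ws - 1)" using r by (intro last_conv_nth) auto
    finally have "last nws = ws ! (length ws - 1)" .
    moreover have "Suc (length ws - 1) = length ws" using r by simp
    ultimately show ?thesis
      using False r length_nth_eq_cut_pos[of "length ws - 1" ws] by (simp add: cut_pos_length)
  qed (use lins in \<open>simp add: nws_def\<close>)
  show "nws \<noteq> []" by (simp add: nws_def)
qed

text \<open>The contribution of the pieces \<open>r, \<dots>, r + n - 1\<close> to the \<open>A\<^sub>\<infinity>\<close>-sum, sorted by the block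
  \<open>(q1, m1)\<close> of the concatenated word that is replaced first.\<close>

definition slot_term :: "('o, 'm) word list \<Rightarrow> (('o, 'm) word \<Rightarrow> 'm) \<Rightarrow> ('o, 'm) word
    \<Rightarrow> nat \<Rightarrow> nat \<Rightarrow> nat \<Rightarrow> nat \<Rightarrow> 'k::comm_ring_1" where
  "slot_term ws b v r n q1 m1 =
    (if block_spans (cut_pos ws) r n q1 m1
     then \<Sum>(q2, m2)\<in>blocks (length (concat ws) - m1 + 1).
            pair_term b (concat ws) (cut_pos ws) (length ws) v ((q1, m1), (q2, m2))
     else 0)"

lemma bbar_ins_b_window:
  fixes ws :: "('o, 'm) word list" and b :: "('o, 'm) word \<Rightarrow> 'm"
  assumes r: "r < length ws" and n: "1 \<le> n" "r + n \<le> length ws"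
    and qm: "(q, m) \<in> blocks (cut_pos ws (r + n) - cut_pos ws r)"
    and spans: "block_spans (cut_pos ws) r n (q + cut_pos ws r) m"
  shows "(bbar b (take r ws @ [ins_b b q m (concat (take n (drop r ws)))] @ drop (r + n) ws) v :: 'k::comm_ring_1)
    = (\<Sum>(q2, m2)\<in>blocks (length (concat ws) - m + 1).
        if admissible_pair (cut_pos ws) (length ws) (q + cut_pos ws r) m q2 m2
          \<and> v = ins_b b q2 m2 (ins_b b (q + cut_pos ws r) m (concat ws))
        then ksign (degw (take q2 (ins_b b (q + cut_pos ws r) m (concat ws)))) else 0)"
proof -
  let ?c = "cut_pos ws" and ?W = "concat ws" and ?L = "length (concat ws)"
  note new = ins_b_window[OF r n qm, of b]
  have m: "1 \<le> m" using qm by (simp add: blocks_def)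
  show ?thesis
    unfolding bbar_block_sum[OF new(5)] new(2) unfolding new(3,4,1)
  proof (rule sum.cong[OF refl], clarify)
    fix q2 m2 assume "(q2, m2) \<in> blocks (?L - m + 1)"
    then have m2: "1 \<le> m2" "q2 + m2 \<le> ?L - m + 1" by (auto simp: blocks_def)
    note adm = new_ends_iff_admissible_pair[OF mono_cut_pos cut_pos_0 cut_pos_length n(2,1) spans m m2]
    show "(if q2 < (if r = 0 then ?c (r + n) - ?c r - m + 1 else ?c 1)
          \<and> ?L - m + 1 - (if r + n = length ws then ?c (r + n) - ?c r - m + 1 else ?L - ?c (length ws - 1))
            < q2 + m2
          \<and> v = ins_b b q2 m2 (ins_b b (q + ?c r) m ?W)
        then ksign (degw (take q2 (ins_b b (q + ?c r) m ?W))) else 0)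
      = (if admissible_pair ?c (length ws) (q + ?c r) m q2 m2 \<and> v = ins_b b q2 m2 (ins_b b (q + ?c r) m ?W)
        then ksign (degw (take q2 (ins_b b (q + ?c r) m ?W))) else (0::'k))"
      by (simp only: conj_assoc[symmetric] adm)
  qed
qed

lemma signed_slot_summand:
  fixes ws :: "('o, 'm) word list" and b :: "('o, 'm) word \<Rightarrow> 'm"
  assumes r: "r < length ws" and n: "1 \<le> n" "r + n \<le> length ws"
    and qm: "(q, m) \<in> blocks (cut_pos ws (r + n) - cut_pos ws r)"
  defines "sub \<equiv> take n (drop r ws)"
  shows "(ksign (degw (concat (take r ws))) :: 'k::comm_ring_1) *
      (if q < length (hd sub) \<and> cut_pos ws (r + n) - cut_pos ws r - length (last sub) < q + m
       then ksign (degw (take q (concat sub)))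
         * bbar b (take r ws @ [ins_b b q m (concat sub)] @ drop (r + n) ws) v
       else 0)
    = slot_term ws b v r n (q + cut_pos ws r) m"
proof -
  let ?c = "cut_pos ws"
  have mono: "?c r \<le> ?c (Suc r)" "?c (r + n - 1) \<le> ?c (r + n)"
    using monoD[OF mono_cut_pos, of r "Suc r" ws] monoD[OF mono_cut_pos, of "r + n - 1" "r + n" ws] n
    by auto
  have lengths: "length (concat sub) = ?c (r + n) - ?c r"
    "length (hd sub) = ?c (Suc r) - ?c r" "length (last sub) = ?c (r + n) - ?c (r + n - 1)"
    using length_concat_window[OF n(2)] hd_window[OF r n(1)] last_window[OF n(2,1)]
      length_nth_eq_cut_pos[OF r] length_nth_eq_cut_pos[of "r + n - 1" ws] n
    by (simp_all add: sub_def)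
  have qm': "1 \<le> m" "q + m \<le> ?c (r + n) - ?c r" using qm by (auto simp: blocks_def)
  have spans: "(q < length (hd sub) \<and> ?c (r + n) - ?c r - length (last sub) < q + m)
      \<longleftrightarrow> block_spans ?c r n (q + ?c r) m"
    unfolding lengths block_spans_def using mono qm' by auto
  have sign: "(ksign (degw (concat (take r ws))) :: 'k) * ksign (degw (take q (concat sub)))
      = ksign (degw (take (q + ?c r) (concat ws)))"
    using concat_window_split[of ws r n] qm' lengths(1)
    by (simp add: ksign_add cut_pos_def sub_def add.commute)
  show ?thesis
    using bbar_ins_b_window[OF r n qm, of b v, where 'k = 'k, folded sub_def]
    unfolding spans slot_term_def pair_term_def
    by (auto simp: sign[symmetric] sum_distrib_left case_prod_unfold if_distrib mult.assoc
        intro!: sum.cong)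
qed

lemma signed_bbar_slot_eq_sum_slot_terms:
  fixes ws :: "('o, 'm) word list" and b :: "('o, 'm) word \<Rightarrow> 'm"
  assumes r: "r < length ws" and n: "1 \<le> n" "r + n \<le> length ws"
  shows "(ksign (degw (concat (take r ws))) :: 'k::comm_ring_1)
      * bbar_slot b (take r ws) (bbar b (take n (drop r ws))) (drop (r + n) ws) v
    = (\<Sum>(q1, m1)\<in>blocks (length (concat ws)). slot_term ws b v r n q1 m1)"
proof -
  let ?c = "cut_pos ws" and ?sub = "take n (drop r ws)"
  have ne: "?sub \<noteq> []" using r n by simp
  have "(ksign (degw (concat (take r ws))) :: 'k)
      * bbar_slot b (take r ws) (bbar b ?sub) (drop (r + n) ws) v
     = (\<Sum>(q, m)\<in>blocks (?c (r + n) - ?c r). slot_term ws b v r n (q + ?c r) m)"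
    unfolding bbar_slot_block_sum[OF ne] length_concat_window[OF n(2)] sum_distrib_left
    by (intro sum.cong refl) (simp only: split_paired_all case_prod_conv signed_slot_summand[OF r n])
  also have "\<dots> = (\<Sum>(q1, m1)\<in>blocks (length (concat ws)).
      if ?c r \<le> q1 \<and> q1 + m1 \<le> ?c r + (?c (r + n) - ?c r) then slot_term ws b v r n q1 m1 else 0)"
    using monoD[OF mono_cut_pos, of r "r + n" ws] monoD[OF mono_cut_pos, of "r + n" "length ws" ws] n
    by (intro sum_blocks_shift) (auto simp: cut_pos_length)
  also have "\<dots> = (\<Sum>(q1, m1)\<in>blocks (length (concat ws)). slot_term ws b v r n q1 m1)"
    using monoD[OF mono_cut_pos, of r "r + n" ws]
    by (intro sum.cong) (auto simp: slot_term_def block_spans_def)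
  finally show ?thesis .
qed

lemma sum_slot_terms_eq_sum_pair_terms:
  fixes ws :: "('o, 'm) word list" and b :: "('o, 'm) word \<Rightarrow> 'm"
  assumes qm: "(q1, m1) \<in> blocks (length (concat ws))"
  shows "(\<Sum>(r, n)\<in>Sigma {..<length ws} (\<lambda>r. {1..length ws - r}). (slot_term ws b v r n q1 m1 :: 'k::comm_ring_1))
    = (\<Sum>(q2, m2)\<in>blocks (length (concat ws) - m1 + 1).
        pair_term b (concat ws) (cut_pos ws) (length ws) v ((q1, m1), (q2, m2)))"
proof -
  let ?RN = "Sigma {..<length ws} (\<lambda>r. {1..length ws - r})"
  have "(q1, m1) \<in> blocks (cut_pos ws (length ws))" using qm by (simp add: cut_pos_length)
  then obtain r0 n0 where rn0: "r0 < length ws" "1 \<le> n0" "r0 + n0 \<le> length ws"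
    and spans: "block_spans (cut_pos ws) r0 n0 q1 m1"
    by (rule block_spans_exists[OF mono_cut_pos cut_pos_0])
  have "(\<Sum>(r, n)\<in>?RN. (slot_term ws b v r n q1 m1 :: 'k)) = (\<Sum>(r, n)\<in>{(r0, n0)}. slot_term ws b v r n q1 m1)"
  proof (rule sum.mono_neutral_right)
    show "\<forall>x\<in>?RN - {(r0, n0)}. (case x of (r, n) \<Rightarrow> slot_term ws b v r n q1 m1) = (0::'k)"
      using block_spans_unique[OF mono_cut_pos _ rn0(2) _ _ spans] qm
      by (auto simp: slot_term_def blocks_def split: if_splits)
  qed (use rn0 in auto)
  then show ?thesis using spans by (simp add: slot_term_def)
qed

lemma ainf_sum_eq_sum_pair_terms:
  fixes ws :: "('o, 'm) word list" and b :: "('o, 'm) word \<Rightarrow> 'm"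
  shows "(\<Sum>r<length ws. \<Sum>n\<in>{1..length ws - r}. (ksign (degw (concat (take r ws))) :: 'k::comm_ring_1)
            * bbar_slot b (take r ws) (bbar b (take n (drop r ws))) (drop (r + n) ws) v)
    = (\<Sum>x\<in>block_pairs (length (concat ws)). pair_term b (concat ws) (cut_pos ws) (length ws) v x)"
proof -
  let ?L = "length (concat ws)" and ?RN = "Sigma {..<length ws} (\<lambda>r. {1..length ws - r})"
  have "(\<Sum>r<length ws. \<Sum>n\<in>{1..length ws - r}. (ksign (degw (concat (take r ws))) :: 'k)
            * bbar_slot b (take r ws) (bbar b (take n (drop r ws))) (drop (r + n) ws) v)
      = (\<Sum>(r, n)\<in>?RN. \<Sum>(q1, m1)\<in>blocks ?L. (slot_term ws b v r n q1 m1 :: 'k))"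
    by (subst sum.Sigma[symmetric]) (auto intro!: sum.cong signed_bbar_slot_eq_sum_slot_terms)
  also have "\<dots> = (\<Sum>(q1, m1)\<in>blocks ?L. \<Sum>(r, n)\<in>?RN. slot_term ws b v r n q1 m1)"
    unfolding case_prod_unfold by (rule sum.swap)
  also have "\<dots> = (\<Sum>(q1, m1)\<in>blocks ?L. \<Sum>(q2, m2)\<in>blocks (?L - m1 + 1).
      pair_term b (concat ws) (cut_pos ws) (length ws) v ((q1, m1), (q2, m2)))"
    by (intro sum.cong refl) (clarify, rule sum_slot_terms_eq_sum_pair_terms)
  also have "\<dots> = (\<Sum>x\<in>block_pairs ?L. pair_term b (concat ws) (cut_pos ws) (length ws) v x)"
    unfolding block_pairs_def by (simp add: sum.Sigma case_prod_unfold)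
  finally show ?thesis .
qed

lemma bbar_ainf_relation:
  assumes C: "ainf_cat Ob S sm b" and ws: "composable Ob S ws"
  shows "(\<lambda>v. \<Sum>r<length ws. \<Sum>n\<in>{1..length ws - r}.
            (ksign (degw (concat (take r ws))) :: 'k::comm_ring_1)
              * bbar_slot b (take r ws) (bbar b (take n (drop r ws))) (drop (r + n) ws) v)
          \<in> tnull Ob S sm"
  unfolding ainf_sum_eq_sum_pair_terms
  by (rule tnull_sum_pair_terms[OF C wf_word_concat[OF ws]])

theorem proposition2p2:
  fixes Ob B :: "'o set"
    and S :: "'o \<Rightarrow> 'o \<Rightarrow> int \<Rightarrow> 'm::ab_group_add set"
    and sm :: "'k::comm_ring_1 \<Rightarrow> 'm \<Rightarrow> 'm"
    and b :: "('o, 'm) word \<Rightarrow> 'm"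
  assumes C: "ainf_cat Ob S sm b"
    and B: "B \<subseteq> Ob"
  shows
    "(\<forall>ws. composable Ob S ws \<and> length ws \<ge> 2 \<longrightarrow>
        (\<lambda>v. (bbar b ws v :: 'k)
           - (bbar b [concat ws] v
              - ksign (degw (hd ws)) * embed (hd ws) (bbar b [concat (tl ws)]) [] v
              - embed [] (bbar b [concat (butlast ws)]) (last ws) v
              + (if length ws \<ge> 3
                 then ksign (degw (hd ws)) * embed (hd ws) (bbar b [concat (butlast (tl ws))]) (last ws) v
                 else 0))) \<in> tnull Ob S sm)
   \<and> (\<forall>ws. composable Ob S ws \<longrightarrow>
        (\<lambda>v. \<Sum>r<length ws. \<Sum>n\<in>{1..length ws - r}.
            (ksign (degw (concat (take r ws))) :: 'k)
              * bbar_slot b (take r ws) (bbar b (take n (drop r ws))) (drop (r + n) ws) v)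
          \<in> tnull Ob S sm)
   \<and> (\<forall>ws. composable Ob S ws \<and> (\<forall>w\<in>set ws. Dword B w) \<longrightarrow>
        (\<exists>g :: ('o, 'm) word \<Rightarrow> 'k. (\<forall>v. g v \<noteq> 0 \<longrightarrow> Dword B v)
            \<and> (\<lambda>v. bbar b ws v - g v) \<in> tnull Ob S sm))"
  apply (intro conjI allI impI)
  subgoal for ws
    by (intro tnull_zeroI) (simp add: bbar_mu_expansion)
  subgoal for ws
    by (rule bbar_ainf_relation[OF C])
  \<comment> \<open>\<open>bar b\<^sub>n\<close> itself is supported on \<open>sD(C|B)\<close>; this needs no hypothesis on \<open>B\<close>.\<close>
  subgoal for ws
    by (intro exI[of _ "bbar b ws"] conjI allI impI tnull_zeroI)
      (auto simp: composable_def intro: bbar_support_Dword)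
  done

end
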